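(* Let $K$ be a field and $I\subset R=K[x_1,\ldots,x_n]$ a monomial ideal. Then: (i) for any ordered $n$-tuple $(i_1,\ldots,i_n)$ of positive integers, $I$ has the nearly copersistence property if and only if its expansion $I^*\subseteq R^*$ with respect to $(i_1,\ldots,i_n)$ has the nearly copersistence property; (ii) for any weight $W$ over $R$, $I$ has the nearly copersistence property if and only if the weighted ideal $I_W$ has the nearly copersistence property.
   Context: A monomial ideal $I$ in a polynomial ring $S$ over $K$ has the nearly copersistence property if there exist a positive integer $s$ and a monomial prime ideal $\mathfrak{p}$ of $S$ such that $\mathrm{Ass}_S(S/I^m)\cup\{\mathfrak{p}\}\supseteq\mathrm{Ass}_S(S/I^{m+1})$ for all $1\le m\le s$, and $\mathrm{Ass}_S(S/I^m)\supseteq\mathrm{Ass}_S(S/I^{m+1})$ for all $m\ge s+1$. Expansion: $R^*=K[x_{11},\ldots,x_{1i_1},\ldots,x_{n1},\ldots,x_{ni_n}]$ and $\mathfrak{p}_j=(x_{j1},\ldots,x_{ji_j})\subseteq R^*$; if $I$ has minimal monomial generators $x_1^{a_k(1)}\cdots x_n^{a_k(n)}$, $k=1,\ldots,m$, then $I^*=\sum_{k=1}^m\mathfrak{p}_1^{a_k(1)}\cdots\mathfrak{p}_n^{a_k(n)}$. Weighting: a weight is a function $W:\{x_1,\ldots,x_n\}\to\mathbb{N}$ (positive integers), $w_i=W(x_i)$; $I_W$ is generated by $h(u)$ for $u$ ranging over the minimal monomial generators of $I$, where $h:R\to R$ is the $K$-algebra homomorphism $h(x_i)=x_i^{w_i}$.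 *)

theory Defs
  imports "HOL-Library.Poly_Mapping"
begin

text \<open>Multivariate polynomials over a field 'k in variables of type 'v:
  a polynomial is a finitely supported map from exponent vectors (finitely supported
  maps 'v to nat) to coefficients; multiplication is the convolution product of
  HOL-Library.Poly_Mapping.\<close>

type_synonym ('v, 'k) mpoly = "('v \<Rightarrow>\<^sub>0 nat) \<Rightarrow>\<^sub>0 'k"

definition polys :: "'v set \<Rightarrow> ('v, 'k::field) mpoly set" where
  "polys V = {f :: ('v, 'k) mpoly. \<forall>a \<in> Poly_Mapping.keys f. Poly_Mapping.keys a \<subseteq> V}"

definition monom :: "('v \<Rightarrow>\<^sub>0 nat) \<Rightarrow> ('v, 'k::field) mpoly" where
  "monom a = Poly_Mapping.single a 1"

definition var :: "'v \<Rightarrow> ('v, 'k::field) mpoly" where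
  "var v = monom (Poly_Mapping.single v 1)"

definition is_ideal :: "'v set \<Rightarrow> ('v, 'k::field) mpoly set \<Rightarrow> bool" where
  "is_ideal V I \<longleftrightarrow> I \<subseteq> polys V \<and> 0 \<in> I \<and>
     (\<forall>f\<in>I. \<forall>g\<in>I. f + g \<in> I) \<and> (\<forall>f\<in>I. \<forall>r\<in>polys V. r * f \<in> I)"

definition ideal_gen :: "'v set \<Rightarrow> ('v, 'k::field) mpoly set \<Rightarrow> ('v, 'k) mpoly set" where
  "ideal_gen V G = \<Inter> {J. is_ideal V J \<and> G \<subseteq> J}"

definition ideal_prod :: "'v set \<Rightarrow> ('v, 'k::field) mpoly set \<Rightarrow> ('v, 'k) mpoly set \<Rightarrow> ('v, 'k) mpoly set" where
  "ideal_prod V I J = ideal_gen V {f * g | f g. f \<in> I \<and> g \<in> J}"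

fun ideal_pow :: "'v set \<Rightarrow> ('v, 'k::field) mpoly set \<Rightarrow> nat \<Rightarrow> ('v, 'k) mpoly set" where
  "ideal_pow V I 0 = polys V"
| "ideal_pow V I (Suc m) = ideal_prod V I (ideal_pow V I m)"

definition monomial_ideal :: "'v set \<Rightarrow> ('v, 'k::field) mpoly set \<Rightarrow> bool" where
  "monomial_ideal V I \<longleftrightarrow> is_ideal V I \<and>
     I = ideal_gen V {monom a | a. Poly_Mapping.keys a \<subseteq> V \<and> monom a \<in> I}"

definition prime_ideal :: "'v set \<Rightarrow> ('v, 'k::field) mpoly set \<Rightarrow> bool" where
  "prime_ideal V P \<longleftrightarrow> is_ideal V P \<and> P \<noteq> polys V \<and>
     (\<forall>f\<in>polys V. \<forall>g\<in>polys V. f * g \<in> P \<longrightarrow> f \<in> P \<or> g \<in> P)"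

definition Ass :: "'v set \<Rightarrow> ('v, 'k::field) mpoly set \<Rightarrow> ('v, 'k) mpoly set set" where
  "Ass V I = {P. prime_ideal V P \<and> (\<exists>f\<in>polys V. P = {g \<in> polys V. g * f \<in> I})}"

definition nearly_copersistent :: "'v set \<Rightarrow> ('v, 'k::field) mpoly set \<Rightarrow> bool" where
  "nearly_copersistent V I \<longleftrightarrow>
     (\<exists>s::nat. 0 < s \<and> (\<exists>p. prime_ideal V p \<and> monomial_ideal V p \<and>
        (\<forall>m. 1 \<le> m \<and> m \<le> s \<longrightarrow>
            Ass V (ideal_pow V I (Suc m)) \<subseteq> Ass V (ideal_pow V I m) \<union> {p}) \<and>
        (\<forall>m. s + 1 \<le> m \<longrightarrow> Ass V (ideal_pow V I (Suc m)) \<subseteq> Ass V (ideal_pow V I m))))"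

definition mingens :: "'v set \<Rightarrow> ('v, 'k::field) mpoly set \<Rightarrow> ('v \<Rightarrow>\<^sub>0 nat) set" where
  "mingens V I = {a. Poly_Mapping.keys a \<subseteq> V \<and> monom a \<in> I \<and>
     (\<forall>b. (\<forall>v. Poly_Mapping.lookup b v \<le> Poly_Mapping.lookup a v) \<and> b \<noteq> a \<longrightarrow> monom b \<notin> I)}"

text \<open>The base ring R = K[x_1,...,x_n] has variables 1..n.
  Expansion w.r.t. (i_1,...,i_n): R* has variables x_(j,k), 1 \<le> j \<le> n, 1 \<le> k \<le> i_j.\<close>
definition exp_vars :: "nat \<Rightarrow> (nat \<Rightarrow> nat) \<Rightarrow> (nat \<times> nat) set" where
  "exp_vars n i = {(j, k). j \<in> {1..n} \<and> k \<in> {1..i j}}"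

definition exp_prime :: "nat \<Rightarrow> (nat \<Rightarrow> nat) \<Rightarrow> nat \<Rightarrow> (nat \<times> nat, 'k::field) mpoly set" where
  "exp_prime n i j = ideal_gen (exp_vars n i) {var (j, k) | k. k \<in> {1..i j}}"

definition exp_term :: "nat \<Rightarrow> (nat \<Rightarrow> nat) \<Rightarrow> (nat \<Rightarrow>\<^sub>0 nat) \<Rightarrow> (nat \<times> nat, 'k::field) mpoly set" where
  "exp_term n i a = foldr (\<lambda>j J. ideal_prod (exp_vars n i)
       (ideal_pow (exp_vars n i) (exp_prime n i j) (Poly_Mapping.lookup a j)) J) [1..<Suc n] (polys (exp_vars n i))"

text \<open>I* = sum over minimal generators; a sum of ideals is the ideal generated by their union.\<close>
definition expansion :: "nat \<Rightarrow> (nat \<Rightarrow> nat) \<Rightarrow> (nat, 'k::field) mpoly set \<Rightarrow> (nat \<times> nat, 'k) mpoly set" where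
  "expansion n i I = ideal_gen (exp_vars n i) (\<Union>a \<in> mingens {1..n} I. exp_term n i a)"

definition weight_exp :: "(nat \<Rightarrow> nat) \<Rightarrow> (nat \<Rightarrow>\<^sub>0 nat) \<Rightarrow> (nat \<Rightarrow>\<^sub>0 nat)" where
  "weight_exp w a = (\<Sum>j \<in> Poly_Mapping.keys a. Poly_Mapping.single j (w j * Poly_Mapping.lookup a j))"

definition weighting :: "nat \<Rightarrow> (nat \<Rightarrow> nat) \<Rightarrow> (nat, 'k::field) mpoly set \<Rightarrow> (nat, 'k) mpoly set" where
  "weighting n w I = ideal_gen {1..n} {monom (weight_exp w a) | a. a \<in> mingens {1..n} I}"

end

(*
  A monomial ideal is determined by its upper set E of exponents, and its associated
  primes are the primes (x_j : j in A) for which some colon {b. c + b in E} is exactly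
  the set of exponents involving a variable of A.  Expansion and weighting replace E by
  its preimage under a map of exponents (summing over the blocks of new variables,
  respectively dividing by the weights) that is compatible with Minkowski sums.  Hence
  the m-th powers correspond, and the associated variable sets of corresponding powers
  agree, up to replacing each variable by its block.  Nearly copersistence depends only
  on this sequence of variable sets, and survives an injective relabelling of it.
*)
theory Submission
  imports Defs "HOL-Library.Product_Lexorder" "HOL-Library.Set_Algebras"
begin

alias lookup = Poly_Mapping.lookup
alias keys = Poly_Mapping.keys
alias single = Poly_Mapping.single

definition exps :: "'v set \<Rightarrow> ('v \<Rightarrow>\<^sub>0 nat) set" where
  "exps V = {a. keys a \<subseteq> V}"

lemma exps_zero [simp]: "0 \<in> exps V"
  by (simp add: exps_def)

lemma exps_add [intro]: "a \<in> exps V \<Longrightarrow> b \<in> exps V \<Longrightarrow> a + b \<in> exps V"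
  unfolding exps_def using keys_add[of a b] by auto

lemma exps_sum: "(\<And>x. x \<in> S \<Longrightarrow> h x \<in> exps V) \<Longrightarrow> sum h S \<in> exps V"
  by (induction S rule: infinite_finite_induct) auto

lemma single_in_exps [simp]: "single j c \<in> exps V \<longleftrightarrow> c = 0 \<or> j \<in> V"
  by (simp add: exps_def)

lemma exps_lookup_eq_0: "a \<in> exps V \<Longrightarrow> j \<notin> V \<Longrightarrow> lookup a j = 0"
  unfolding exps_def by (auto simp: in_keys_iff)

lemma exps_eqI:
  assumes "a \<in> exps V" "b \<in> exps V" "\<And>j. j \<in> V \<Longrightarrow> lookup a j = lookup b j"
  shows "a = b"
  by (rule poly_mapping_eqI) (metis assms exps_lookup_eq_0)

lemma keys_mono:
  fixes a b :: "'v \<Rightarrow>\<^sub>0 nat"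
  assumes "lookup b \<le> lookup a"
  shows "keys b \<subseteq> keys a"
proof
  fix x assume "x \<in> keys b"
  then have "0 < lookup b x" by (simp add: in_keys_iff)
  also have "\<dots> \<le> lookup a x" using assms by (simp add: le_fun_def)
  finally show "x \<in> keys a" by (simp add: in_keys_iff)
qed

lemma exps_mono: "lookup b \<le> lookup a \<Longrightarrow> a \<in> exps V \<Longrightarrow> b \<in> exps V"
  using keys_mono unfolding exps_def by blast

lemma exps_diff [intro]: "(a :: 'v \<Rightarrow>\<^sub>0 nat) \<in> exps V \<Longrightarrow> a - b \<in> exps V"
  by (rule exps_mono[of _ a]) (simp add: le_fun_def lookup_minus)

lemma add_diff_pointwise:
  fixes a b :: "'v \<Rightarrow>\<^sub>0 nat"
  shows "lookup a \<le> lookup b \<Longrightarrow> a + (b - a) = b"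
  by (rule poly_mapping_eqI) (simp add: le_fun_def lookup_add lookup_minus)

definition vec_on :: "'v set \<Rightarrow> ('v \<Rightarrow> nat) \<Rightarrow> ('v \<Rightarrow>\<^sub>0 nat)" where
  "vec_on V g = (\<Sum>j\<in>V. single j (g j))"

lemma lookup_vec_on: "finite V \<Longrightarrow> lookup (vec_on V g) j = (if j \<in> V then g j else 0)"
  unfolding vec_on_def by (simp add: lookup_sum lookup_single when_def)

lemma vec_on_in_exps: "vec_on V g \<in> exps V"
  unfolding vec_on_def by (rule exps_sum) simp

definition total_deg :: "('v \<Rightarrow>\<^sub>0 nat) \<Rightarrow> nat" where
  "total_deg a = (\<Sum>v\<in>keys a. lookup a v)"

lemma total_deg_less:
  assumes le: "lookup b \<le> lookup a" and ne: "b \<noteq> a"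
  shows "total_deg b < total_deg a"
proof -
  have "total_deg b = (\<Sum>v\<in>keys a. lookup b v)"
    unfolding total_deg_def by (rule sum.mono_neutral_left) (auto simp: keys_mono[OF le] in_keys_iff)
  also have "\<dots> < (\<Sum>v\<in>keys a. lookup a v)"
  proof (rule sum_strict_mono_ex1)
    obtain v where "lookup b v \<noteq> lookup a v"
      using ne by (auto simp: poly_mapping_eq_iff fun_eq_iff)
    then have "lookup b v < lookup a v" using le by (simp add: le_fun_def order_less_le)
    then show "\<exists>v\<in>keys a. lookup b v < lookup a v" by (auto simp: in_keys_iff)
  qed (use le in \<open>auto simp: le_fun_def\<close>)
  finally show ?thesis unfolding total_deg_def .
qed

lemma remove_var:
  fixes a :: "'v \<Rightarrow>\<^sub>0 nat"
  assumes "j \<in> keys a"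
  shows "a - single j 1 + single j 1 = a"
  using assms by (intro poly_mapping_eqI) (auto simp: lookup_add lookup_minus lookup_single when_def in_keys_iff)

lemma nat_poly_mapping_induct [case_names zero add_var]:
  fixes a :: "'v \<Rightarrow>\<^sub>0 nat"
  assumes zero: "P 0" and add_var: "\<And>a j. P a \<Longrightarrow> P (a + single j 1)"
  shows "P a"
proof (induction "total_deg a" arbitrary: a rule: less_induct)
  case less
  show ?case
  proof (cases "a = 0")
    case False
    then obtain j where j: "j \<in> keys a" by fastforce
    let ?a' = "a - single j 1"
    have "lookup ?a' \<le> lookup a" by (simp add: le_fun_def lookup_minus)
    moreover have "lookup ?a' j \<noteq> lookup a j" using j by (simp add: lookup_minus in_keys_iff)
    then have "?a' \<noteq> a" by metis
    ultimately have "P ?a'" using less total_deg_less by blast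
    then show ?thesis using add_var remove_var[OF j] by metis
  qed (use zero in simp)
qed

lemma polys_add: "f \<in> polys V \<Longrightarrow> g \<in> polys V \<Longrightarrow> f + g \<in> polys V"
  unfolding polys_def using keys_add[of f g] by blast

lemma polys_mult: "f \<in> polys V \<Longrightarrow> g \<in> polys V \<Longrightarrow> f * g \<in> polys V"
  unfolding polys_def by (fastforce dest: subsetD[OF keys_mult] subsetD[OF keys_add])

lemma polys_uminus: "f \<in> polys V \<Longrightarrow> - (f :: ('v,'k::field) mpoly) \<in> polys V"
  by (simp add: polys_def)

lemma polys_diff: "f \<in> polys V \<Longrightarrow> g \<in> polys V \<Longrightarrow> (f :: ('v,'k::field) mpoly) - g \<in> polys V"
  using polys_add[of f V "- g"] polys_uminus[of g V] by simp

lemma polys_zero [simp]: "0 \<in> polys V"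
  by (simp add: polys_def)

lemma polys_one [simp]: "(1 :: ('v,'k::field) mpoly) \<in> polys V"
  by (simp add: polys_def)

lemma polys_power: "f \<in> polys V \<Longrightarrow> f ^ r \<in> polys V"
  by (induction r) (simp_all add: polys_mult)

lemma single_in_polys: "a \<in> exps V \<Longrightarrow> (single a c :: ('v,'k::field) mpoly) \<in> polys V"
  by (simp add: polys_def exps_def)

lemma const_in_polys [simp]: "(single 0 c :: ('v,'k::field) mpoly) \<in> polys V"
  by (simp add: polys_def)

lemma keys_in_exps: "f \<in> polys V \<Longrightarrow> a \<in> keys f \<Longrightarrow> a \<in> exps V"
  unfolding polys_def exps_def by blast

lemma keys_monom [simp]: "keys (monom a :: ('v,'k::field) mpoly) = {a}"
  by (simp add: monom_def)

lemma monom_in_polys [simp]: "(monom a :: ('v,'k::field) mpoly) \<in> polys V \<longleftrightarrow> a \<in> exps V"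
  by (simp add: polys_def exps_def)

lemma monom_mult: "(monom a :: ('v,'k::field) mpoly) * monom b = monom (a + b)"
  by (simp add: monom_def mult_single)

lemma single_eq_const_mult_monom: "(single a c :: ('v,'k::field) mpoly) = single 0 c * monom a"
  by (simp add: monom_def mult_single)

lemma sum_single_lookup: "(\<Sum>a\<in>keys f. single a (lookup f a)) = f"
  by (rule poly_mapping_eqI) (auto simp: lookup_sum lookup_single when_def in_keys_iff sum.delta)

lemma ideal_subset_polys: "is_ideal V J \<Longrightarrow> J \<subseteq> polys V"
  unfolding is_ideal_def by blast

lemma ideal_zero: "is_ideal V J \<Longrightarrow> 0 \<in> J"
  unfolding is_ideal_def by blast

lemma ideal_add: "is_ideal V J \<Longrightarrow> f \<in> J \<Longrightarrow> g \<in> J \<Longrightarrow> f + g \<in> J"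
  unfolding is_ideal_def by blast

lemma ideal_mult_left: "is_ideal V J \<Longrightarrow> f \<in> J \<Longrightarrow> r \<in> polys V \<Longrightarrow> r * f \<in> J"
  unfolding is_ideal_def by blast

lemma ideal_diff:
  assumes J: "is_ideal V (J :: ('v,'k::field) mpoly set)" and "f \<in> J" "g \<in> J"
  shows "f - g \<in> J"
proof -
  have "single 0 (-1) * g \<in> J" using ideal_mult_left[OF J \<open>g \<in> J\<close>] by simp
  then have "- g \<in> J" by (simp add: single_uminus)
  from ideal_add[OF J \<open>f \<in> J\<close> this] show ?thesis by simp
qed

lemma ideal_sum: "is_ideal V J \<Longrightarrow> (\<And>x. x \<in> S \<Longrightarrow> h x \<in> J) \<Longrightarrow> sum h S \<in> J"
  by (induction S rule: infinite_finite_induct) (auto intro: ideal_zero ideal_add)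

lemma polys_is_ideal: "is_ideal V (polys V)"
  unfolding is_ideal_def by (simp add: polys_add polys_mult)

lemma ideal_gen_least: "is_ideal V J \<Longrightarrow> S \<subseteq> J \<Longrightarrow> ideal_gen V S \<subseteq> J"
  unfolding ideal_gen_def by blast

lemma ideal_gen_superset: "S \<subseteq> ideal_gen V S"
  unfolding ideal_gen_def by blast

lemma ideal_gen_is_ideal:
  assumes "S \<subseteq> polys V" shows "is_ideal V (ideal_gen V S)"
proof -
  have "ideal_gen V S \<subseteq> polys V"
    using ideal_gen_least[OF polys_is_ideal assms] .
  then show ?thesis
    unfolding is_ideal_def ideal_gen_def by (auto intro: ideal_zero ideal_add ideal_mult_left)
qed

lemma prime_ideal_is_ideal: "prime_ideal V P \<Longrightarrow> is_ideal V P"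
  unfolding prime_ideal_def by blast

lemma prime_ideal_one:
  assumes P: "prime_ideal V (P :: ('v,'k::field) mpoly set)" shows "1 \<notin> P"
proof
  assume "1 \<in> P"
  then have "polys V \<subseteq> P"
    using ideal_mult_left[OF prime_ideal_is_ideal[OF P]] by fastforce
  then show False using P ideal_subset_polys[OF prime_ideal_is_ideal[OF P]]
    unfolding prime_ideal_def by blast
qed

lemma prime_ideal_power:
  assumes P: "prime_ideal V (P :: ('v,'k::field) mpoly set)" and f: "f \<in> polys V"
  shows "f ^ r \<in> P \<Longrightarrow> f \<in> P"
proof (induction r)
  case 0 then show ?case using prime_ideal_one[OF P] by simp
next
  case (Suc r)
  then show ?case using P f polys_power[OF f, of r] unfolding prime_ideal_def by auto
qed

section \<open>Monomial ideals as upper sets of exponents\<close>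

definition mono_ideal :: "'v set \<Rightarrow> ('v \<Rightarrow>\<^sub>0 nat) set \<Rightarrow> ('v, 'k::field) mpoly set" where
  "mono_ideal V E = {f \<in> polys V. keys f \<subseteq> E}"

definition upper_set :: "'v set \<Rightarrow> ('v \<Rightarrow>\<^sub>0 nat) set \<Rightarrow> bool" where
  "upper_set V E \<longleftrightarrow> E \<subseteq> exps V \<and> (\<forall>a\<in>E. \<forall>c\<in>exps V. a + c \<in> E)"

lemma upper_set_subset: "upper_set V E \<Longrightarrow> a \<in> E \<Longrightarrow> a \<in> exps V"
  unfolding upper_set_def by blast

lemma upper_set_add: "upper_set V E \<Longrightarrow> a \<in> E \<Longrightarrow> c \<in> exps V \<Longrightarrow> a + c \<in> E"
  unfolding upper_set_def by blast

lemma upper_set_mono: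
  assumes "upper_set V E" "a \<in> E" "b \<in> exps V" "lookup a \<le> lookup b"
  shows "b \<in> E"
  using upper_set_add[OF assms(1,2) exps_diff[OF assms(3), of a]] add_diff_pointwise[OF assms(4)] by simp

lemma upper_set_exps: "upper_set V (exps V)"
  by (simp add: upper_set_def exps_add)

lemma upper_set_plus:
  assumes E: "upper_set V E" and F: "upper_set V F" shows "upper_set V (E + F)"
  unfolding upper_set_def
proof (intro conjI ballI subsetI)
  fix x assume "x \<in> E + F"
  then show "x \<in> exps V" by (auto elim!: set_plus_elim intro: upper_set_subset[OF E] upper_set_subset[OF F])
next
  fix x c assume "x \<in> E + F" "c \<in> exps V"
  then obtain e f where "x = e + f" "e \<in> E" "f \<in> F" by (auto elim: set_plus_elim)
  moreover have "x + c = (e + c) + f" using \<open>x = e + f\<close> by (simp add: algebra_simps)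
  ultimately show "x + c \<in> E + F" using upper_set_add[OF E _ \<open>c \<in> exps V\<close>] by auto
qed

lemma upper_set_UN: "(\<And>a. a \<in> X \<Longrightarrow> upper_set V (G a)) \<Longrightarrow> upper_set V (\<Union>a\<in>X. G a)"
  unfolding upper_set_def by blast

lemma monom_in_mono_ideal [simp]:
  "(monom a :: ('v,'k::field) mpoly) \<in> mono_ideal V E \<longleftrightarrow> a \<in> exps V \<and> a \<in> E"
  by (auto simp: mono_ideal_def)

lemma mono_ideal_exps: "mono_ideal V (exps V) = polys V"
  by (auto simp: mono_ideal_def polys_def exps_def)

lemma mono_ideal_is_ideal:
  assumes E: "upper_set V E" shows "is_ideal V (mono_ideal V E :: ('v,'k::field) mpoly set)"
  unfolding is_ideal_def
proof (intro conjI ballI)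
  fix f g :: "('v,'k) mpoly" assume "f \<in> mono_ideal V E" "g \<in> mono_ideal V E"
  then show "f + g \<in> mono_ideal V E"
    using keys_add[of f g] polys_add[of f V g] unfolding mono_ideal_def by auto
next
  fix f r :: "('v,'k) mpoly" assume f: "f \<in> mono_ideal V E" and r: "r \<in> polys V"
  have "keys (r * f) \<subseteq> E"
  proof
    fix a assume "a \<in> keys (r * f)"
    then obtain b c where "a = c + b" "b \<in> keys r" "c \<in> keys f"
      using keys_mult[of r f] by (auto simp: add.commute)
    moreover have "c \<in> E" "b \<in> exps V"
      using \<open>c \<in> keys f\<close> \<open>b \<in> keys r\<close> f r keys_in_exps unfolding mono_ideal_def by auto
    ultimately show "a \<in> E" using upper_set_add[OF E] by simp
  qed
  then show "r * f \<in> mono_ideal V E"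
    using f r polys_mult[of r V f] unfolding mono_ideal_def by simp
qed (auto simp: mono_ideal_def)

lemma mono_ideal_least:
  assumes J: "is_ideal V (J :: ('v,'k::field) mpoly set)" and E: "\<And>a. a \<in> E \<Longrightarrow> monom a \<in> J"
  shows "mono_ideal V E \<subseteq> J"
proof
  fix f :: "('v,'k) mpoly" assume f: "f \<in> mono_ideal V E"
  have "single a (lookup f a) \<in> J" if "a \<in> keys f" for a
  proof -
    have "monom a \<in> J" using that f E unfolding mono_ideal_def by blast
    then show ?thesis
      unfolding single_eq_const_mult_monom[of a] by (rule ideal_mult_left[OF J]) simp
  qed
  then have "(\<Sum>a\<in>keys f. single a (lookup f a)) \<in> J"
    by (rule ideal_sum[OF J])
  then show "f \<in> J" by (simp add: sum_single_lookup)
qed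

lemma ideal_gen_eq_mono_ideal:
  assumes E: "upper_set V E" and S: "S \<subseteq> (mono_ideal V E :: ('v,'k::field) mpoly set)"
    and gens: "\<And>a. a \<in> E \<Longrightarrow> monom a \<in> ideal_gen V S"
  shows "ideal_gen V S = mono_ideal V E"
proof
  show "ideal_gen V S \<subseteq> mono_ideal V E" by (rule ideal_gen_least[OF mono_ideal_is_ideal[OF E] S])
  have "S \<subseteq> polys V" using S by (auto simp: mono_ideal_def)
  then show "mono_ideal V E \<subseteq> ideal_gen V S" by (rule mono_ideal_least[OF ideal_gen_is_ideal gens])
qed

lemma mono_ideal_is_monomial:
  assumes E: "upper_set V E" shows "monomial_ideal V (mono_ideal V E :: ('v,'k::field) mpoly set)"
proof -
  let ?S = "{monom a :: ('v,'k) mpoly | a. keys a \<subseteq> V \<and> (monom a :: ('v,'k) mpoly) \<in> mono_ideal V E}"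
  have "ideal_gen V ?S = mono_ideal V E"
  proof (rule ideal_gen_eq_mono_ideal[OF E])
    fix a assume "a \<in> E"
    then have "a \<in> exps V" by (rule upper_set_subset[OF E])
    then have "monom a \<in> ?S"
      using \<open>a \<in> E\<close> by (intro CollectI exI[of _ a]) (simp add: exps_def)
    then show "monom a \<in> ideal_gen V ?S" by (rule subsetD[OF ideal_gen_superset])
  qed blast
  then show ?thesis
    unfolding monomial_ideal_def by (rule conjI[OF mono_ideal_is_ideal[OF E] sym])
qed

lemma lookup_monom_mult: "lookup ((monom b :: ('v,'k::field) mpoly) * f) (b + a) = lookup f a"
proof -
  have "monom b * f = (\<Sum>x\<in>keys f. single (b + x) (lookup f x))"
    by (subst (1) sum_single_lookup[symmetric]) (simp add: sum_distrib_left monom_def mult_single)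
  then show ?thesis
    by (simp add: lookup_sum lookup_single when_def in_keys_iff sum.delta)
qed

lemma keys_monom_mult: "keys ((monom b :: ('v,'k::field) mpoly) * f) = (+) b ` keys f"
proof
  show "keys (monom b * f) \<subseteq> (+) b ` keys f"
    using keys_mult[of "monom b :: ('v,'k) mpoly" f] by auto
  show "(+) b ` keys f \<subseteq> keys (monom b * f)"
    by (auto simp: in_keys_iff lookup_monom_mult)
qed

lemma monom_mult_in_mono_ideal_iff:
  assumes "b \<in> exps V" "f \<in> polys V"
  shows "(monom b :: ('v,'k::field) mpoly) * f \<in> mono_ideal V E \<longleftrightarrow> (\<forall>a\<in>keys f. b + a \<in> E)"
  using polys_mult[of "monom b" V f] assms unfolding mono_ideal_def by (auto simp: keys_monom_mult)

lemma ideal_monom_mono: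
  assumes J: "is_ideal V (J :: ('v,'k::field) mpoly set)" and a: "monom a \<in> J"
    and u: "u \<in> exps V" and le: "lookup a \<le> lookup u"
  shows "monom u \<in> J"
proof -
  have "monom (u - a) * monom a \<in> J" using u by (intro ideal_mult_left[OF J a]) (simp add: exps_diff)
  then show ?thesis by (simp add: monom_mult add.commute add_diff_pointwise[OF le])
qed

lemma ideal_prod_mono_ideal:
  assumes E: "upper_set V E" and F: "upper_set V F"
  shows "ideal_prod V (mono_ideal V E) (mono_ideal V F :: ('v,'k::field) mpoly set) = mono_ideal V (E + F)"
  unfolding ideal_prod_def
proof (rule ideal_gen_eq_mono_ideal[OF upper_set_plus[OF E F]])
  let ?S = "{f * g |f g. f \<in> (mono_ideal V E :: ('v,'k) mpoly set) \<and> g \<in> mono_ideal V F}"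
  show "?S \<subseteq> mono_ideal V (E + F)"
  proof
    fix x assume "x \<in> ?S"
    then obtain f g where x: "x = f * g" and fg: "f \<in> mono_ideal V E" "g \<in> mono_ideal V F" by blast
    have "keys x \<subseteq> E + F"
      using keys_mult[of f g] fg unfolding x mono_ideal_def by (fastforce intro: set_plus_intro)
    then show "x \<in> mono_ideal V (E + F)"
      using fg polys_mult unfolding x mono_ideal_def by blast
  qed
  fix a assume "a \<in> E + F"
  then obtain e f where ef: "a = e + f" "e \<in> E" "f \<in> F" by (auto elim: set_plus_elim)
  then have "monom e * monom f \<in> ?S"
    using upper_set_subset[OF E] upper_set_subset[OF F] by fastforce
  then show "monom a \<in> ideal_gen V ?S"
    unfolding ef(1) monom_mult[symmetric] by (rule subsetD[OF ideal_gen_superset])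
qed

fun exps_pow :: "'v set \<Rightarrow> ('v \<Rightarrow>\<^sub>0 nat) set \<Rightarrow> nat \<Rightarrow> ('v \<Rightarrow>\<^sub>0 nat) set" where
  "exps_pow V E 0 = exps V"
| "exps_pow V E (Suc m) = E + exps_pow V E m"

lemma upper_set_exps_pow: "upper_set V E \<Longrightarrow> upper_set V (exps_pow V E m)"
  by (induction m) (simp_all add: upper_set_exps upper_set_plus)

lemma ideal_pow_mono_ideal:
  assumes E: "upper_set V E"
  shows "ideal_pow V (mono_ideal V E :: ('v,'k::field) mpoly set) m = mono_ideal V (exps_pow V E m)"
  by (induction m) (simp_all add: mono_ideal_exps ideal_prod_mono_ideal[OF E upper_set_exps_pow[OF E]])

lemma ideal_gen_UN_mono_ideal:
  assumes G: "\<And>a. a \<in> X \<Longrightarrow> upper_set V (G a)"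
  shows "ideal_gen V (\<Union>a\<in>X. mono_ideal V (G a) :: ('v,'k::field) mpoly set) = mono_ideal V (\<Union>a\<in>X. G a)"
proof (rule ideal_gen_eq_mono_ideal[OF upper_set_UN[OF G]])
  show "(\<Union>a\<in>X. mono_ideal V (G a) :: ('v,'k) mpoly set) \<subseteq> mono_ideal V (\<Union>a\<in>X. G a)"
    unfolding mono_ideal_def by blast
  fix b assume "b \<in> (\<Union>a\<in>X. G a)"
  then have "(monom b :: ('v,'k) mpoly) \<in> (\<Union>a\<in>X. mono_ideal V (G a))"
    using upper_set_subset[OF G] by auto
  then show "monom b \<in> ideal_gen V (\<Union>a\<in>X. mono_ideal V (G a) :: ('v,'k) mpoly set)"
    by (rule subsetD[OF ideal_gen_superset])
qed

definition exps_of :: "'v set \<Rightarrow> ('v, 'k::field) mpoly set \<Rightarrow> ('v \<Rightarrow>\<^sub>0 nat) set" where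
  "exps_of V I = {a \<in> exps V. monom a \<in> I}"

lemma upper_set_exps_of:
  assumes I: "is_ideal V (I :: ('v,'k::field) mpoly set)" shows "upper_set V (exps_of V I)"
  unfolding upper_set_def
proof (intro conjI ballI)
  fix a c assume a: "a \<in> exps_of V I" and c: "c \<in> exps V"
  have "monom c * monom a \<in> I"
    using a c by (intro ideal_mult_left[OF I]) (simp_all add: exps_of_def)
  then have "monom (a + c) \<in> I" by (simp only: monom_mult add.commute)
  then show "a + c \<in> exps_of V I"
    using a c unfolding exps_of_def by blast
qed (simp add: exps_of_def)

lemma monomial_ideal_eq_mono_ideal:
  assumes I: "monomial_ideal V (I :: ('v,'k::field) mpoly set)"
  shows "I = mono_ideal V (exps_of V I)"
proof -
  have E: "upper_set V (exps_of V I)"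
    using I upper_set_exps_of unfolding monomial_ideal_def by blast
  let ?S = "{monom a :: ('v,'k) mpoly | a. keys a \<subseteq> V \<and> monom a \<in> I}"
  have "ideal_gen V ?S = mono_ideal V (exps_of V I)"
  proof (rule ideal_gen_eq_mono_ideal[OF E])
    fix a assume "a \<in> exps_of V I"
    then have "monom a \<in> ?S" unfolding exps_of_def exps_def by blast
    then show "monom a \<in> ideal_gen V ?S" by (rule subsetD[OF ideal_gen_superset])
  qed (auto simp: exps_of_def exps_def)
  moreover have "I = ideal_gen V ?S" using I unfolding monomial_ideal_def by blast
  ultimately show ?thesis by simp
qed

lemma mingens_subset: "mingens V I \<subseteq> exps_of V I"
  unfolding mingens_def exps_of_def exps_def by blast

lemma mingens_below:
  "a \<in> exps_of V I \<Longrightarrow> \<exists>g\<in>mingens V I. lookup g \<le> lookup a"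
proof (induction "total_deg a" arbitrary: a rule: less_induct)
  case less
  show ?case
  proof (cases "a \<in> mingens V I")
    case False
    then obtain b where b: "lookup b \<le> lookup a" "b \<noteq> a" "monom b \<in> I"
      using less.prems unfolding mingens_def exps_of_def exps_def le_fun_def by blast
    then have "b \<in> exps_of V I"
      using less.prems exps_mono unfolding exps_of_def by blast
    then show ?thesis
      using less.hyps[OF total_deg_less[OF b(1,2)]] b(1) order_trans by blast
  qed auto
qed

section \<open>Associated primes of monomial ideals\<close>

lemma lookup_mult_unique_decomp:
  fixes g h :: "('v, 'k::field) mpoly"
  assumes t: "t \<in> keys g" and s: "s \<in> keys h"
    and unique: "\<And>a b. a \<in> keys g \<Longrightarrow> b \<in> keys h \<Longrightarrow> a + b = t + s \<Longrightarrow> a = t \<and> b = s"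
  shows "lookup (g * h) (t + s) = lookup g t * lookup h s"
proof -
  have "g * h = (\<Sum>a\<in>keys g. \<Sum>b\<in>keys h. single (a + b) (lookup g a * lookup h b))"
    by (subst (1 2) sum_single_lookup[symmetric]) (simp only: sum_product mult_single)
  then have "lookup (g * h) (t + s) =
      (\<Sum>a\<in>keys g. \<Sum>b\<in>keys h. lookup g a * lookup h b when a + b = t + s)"
    by (simp add: lookup_sum lookup_single)
  also have "\<dots> = (\<Sum>a\<in>keys g. if a = t then lookup g t * lookup h s else 0)"
    using unique s by (intro sum.cong refl) (auto simp: when_def intro!: sum.neutral)
  also have "\<dots> = lookup g t * lookup h s"
    using t by simp
  finally show ?thesis .
qed

lemma add_eq_add_imp_eq:
  fixes a b t s :: "'a::ordered_cancel_ab_semigroup_add"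
  assumes "a \<le> t" "b \<le> s" "a + b = t + s"
  shows "a = t \<and> b = s"
proof -
  have "a = t"
  proof (rule ccontr)
    assume "a \<noteq> t"
    then have "a + b < t + b" using assms(1) by (simp add: add_strict_right_mono)
    also have "\<dots> \<le> t + s" using assms(2) by (rule add_left_mono)
    finally show False using assms(3) by simp
  qed
  then show ?thesis using assms(3) by simp
qed

lemma lookup_mult_Max:
  fixes g h :: "('v::linorder, 'k::field) mpoly"
  assumes "g \<noteq> 0" "h \<noteq> 0"
  shows "lookup (g * h) (Max (keys g) + Max (keys h)) = lookup g (Max (keys g)) * lookup h (Max (keys h))"
  using assms by (intro lookup_mult_unique_decomp add_eq_add_imp_eq) auto

lemma keys_diff_single_lookup:
  fixes h :: "('v, 'k::field) mpoly"
  shows "lookup h x = c \<Longrightarrow> keys (h - single x c) = keys h - {x}"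
  by (auto simp: in_keys_iff lookup_minus lookup_single when_def split: if_splits)

lemma Max_keys_add_mem:
  fixes g h :: "('v::linorder, 'k::field) mpoly"
  assumes "g \<noteq> 0" "h \<noteq> 0" and gh: "g * h \<in> mono_ideal V E"
  shows "Max (keys g) + Max (keys h) \<in> E"
proof -
  have "Max (keys g) \<in> keys g" "Max (keys h) \<in> keys h" using assms by simp_all
  then have "Max (keys g) + Max (keys h) \<in> keys (g * h)"
    using lookup_mult_Max[OF assms(1,2)] by (simp add: in_keys_iff)
  then show ?thesis using gh unfolding mono_ideal_def by blast
qed

lemma cancel_leading_term:
  fixes g h :: "('v::linorder, 'k::field) mpoly"
  assumes E: "upper_set V E" and g: "g \<in> polys V" "g \<noteq> 0"
    and h: "h \<in> polys V" "h \<noteq> 0" and gh: "g * h \<in> mono_ideal V E"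
  defines "h' \<equiv> monom (Max (keys g)) * h - single (Max (keys g) + Max (keys h)) (lookup h (Max (keys h)))"
  shows "h' \<in> polys V" and "card (keys h') = card (keys h) - 1"
    and "g * h' \<in> mono_ideal V E" and "monom (Max (keys g)) * h - h' \<in> mono_ideal V E"
proof -
  have J: "is_ideal V (mono_ideal V E :: ('v,'k) mpoly set)" by (rule mono_ideal_is_ideal[OF E])
  let ?t = "Max (keys g)" and ?s = "Max (keys h)" and ?c = "lookup h (Max (keys h))"
  have t: "monom ?t \<in> polys V" using g by (simp add: keys_in_exps)
  have ts: "monom (?t + ?s) \<in> (mono_ideal V E :: ('v,'k) mpoly set)"
    using Max_keys_add_mem[OF g(2) h(2) gh] upper_set_subset[OF E] by simp
  have "keys h' = (+) ?t ` keys h - {?t + ?s}"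
    unfolding h'_def keys_monom_mult[symmetric] by (rule keys_diff_single_lookup) (simp add: lookup_monom_mult)
  moreover have "?s \<in> keys h" using h(2) by simp
  ultimately show "card (keys h') = card (keys h) - 1" by (simp add: card_image)
  show "h' \<in> polys V"
    unfolding h'_def by (intro polys_diff polys_mult t h(1) single_in_polys) (use ts in simp)
  have "monom ?t * h - h' = single 0 ?c * monom (?t + ?s)"
    unfolding h'_def single_eq_const_mult_monom[of "?t + ?s"] by simp
  then show "monom ?t * h - h' \<in> mono_ideal V E"
    using ideal_mult_left[OF J ts const_in_polys] by simp
  have "monom ?t * (g * h) \<in> mono_ideal V E" by (rule ideal_mult_left[OF J gh t])
  moreover have "(single 0 ?c * g) * monom (?t + ?s) \<in> mono_ideal V E"
    by (rule ideal_mult_left[OF J ts]) (simp add: polys_mult g(1))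
  moreover have "g * h' = monom ?t * (g * h) - (single 0 ?c * g) * monom (?t + ?s)"
    unfolding h'_def single_eq_const_mult_monom[of "?t + ?s"] by (simp add: algebra_simps)
  ultimately show "g * h' \<in> mono_ideal V E" using ideal_diff[OF J] by simp
qed

text \<open>Induction on the number of terms of \<open>h\<close>: the leading term of \<open>x\<^sup>t h\<close> lies in the
  ideal, and cancelling it gives a shorter \<open>h'\<close> with \<open>g h'\<close> still in the ideal.\<close>

lemma monom_Max_power_mult_in_mono_ideal:
  fixes g h :: "('v::linorder, 'k::field) mpoly"
  assumes E: "upper_set V E" and g: "g \<in> polys V" "g \<noteq> 0"
    and h: "h \<in> polys V" and gh: "g * h \<in> mono_ideal V E"
  shows "monom (Max (keys g)) ^ card (keys h) * h \<in> mono_ideal V E"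
  using h gh
proof (induction "card (keys h)" arbitrary: h)
  case 0
  then show ?case by (simp add: mono_ideal_def)
next
  case (Suc k h)
  have J: "is_ideal V (mono_ideal V E :: ('v,'k) mpoly set)" by (rule mono_ideal_is_ideal[OF E])
  let ?t = "Max (keys g)"
  let ?h' = "monom ?t * h - single (?t + Max (keys h)) (lookup h (Max (keys h)))"
  have "h \<noteq> 0" using Suc.hyps(2) by auto
  note h' = cancel_leading_term[OF E g Suc.prems(1) this Suc.prems(2)]
  have "card (keys ?h') = k" using h'(2) Suc.hyps(2) by simp
  then have "monom ?t ^ k * ?h' \<in> mono_ideal V E"
    using Suc.hyps(1)[of ?h'] h'(1,3) by simp
  moreover have "monom ?t ^ k * (monom ?t * h - ?h') \<in> mono_ideal V E"
    using g by (intro ideal_mult_left[OF J h'(4)] polys_power) (simp add: keys_in_exps)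
  moreover have "monom ?t ^ Suc k * h = monom ?t ^ k * ?h' + monom ?t ^ k * (monom ?t * h - ?h')"
    by (simp add: algebra_simps)
  ultimately show ?case using ideal_add[OF J] Suc.hyps(2)[symmetric] by simp
qed

text \<open>Some power of the leading monomial of \<open>g \<in> P\<close> lies in \<open>P\<close> by the previous lemma,
  hence so does the monomial itself; then remove that term of \<open>g\<close> and induct.\<close>

lemma colon_prime_contains_monoms:
  fixes f :: "('v::linorder, 'k::field) mpoly"
  assumes E: "upper_set V E" and f: "f \<in> polys V"
    and P_def: "P = {g \<in> polys V. g * f \<in> mono_ideal V E}" and P: "prime_ideal V P"
  shows "g \<in> P \<Longrightarrow> t \<in> keys g \<Longrightarrow> monom t \<in> P"
proof (induction "card (keys g)" arbitrary: g rule: less_induct)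
  case less
  have J: "is_ideal V P" by (rule prime_ideal_is_ideal[OF P])
  have g: "g \<in> polys V" "g * f \<in> mono_ideal V E" "g \<noteq> 0" using less.prems P_def by auto
  let ?t = "Max (keys g)"
  have t: "?t \<in> keys g" "?t \<in> exps V" using g by (auto simp: keys_in_exps)
  have "monom ?t ^ card (keys f) * f \<in> mono_ideal V E"
    by (rule monom_Max_power_mult_in_mono_ideal[OF E g(1,3) f g(2)])
  then have "monom ?t ^ card (keys f) \<in> P"
    using P_def t(2) by (simp add: polys_power)
  then have mt: "monom ?t \<in> P" by (rule prime_ideal_power[OF P, rotated]) (simp add: t(2))
  show ?case
  proof (cases "t = ?t")
    case False
    define g' where "g' = g - single ?t (lookup g ?t)"
    have "single ?t (lookup g ?t) \<in> P"
      unfolding single_eq_const_mult_monom[of ?t] by (rule ideal_mult_left[OF J mt]) simp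
    then have "g' \<in> P" unfolding g'_def by (rule ideal_diff[OF J less.prems(1)])
    moreover have keys_g': "keys g' = keys g - {?t}"
      unfolding g'_def by (rule keys_diff_single_lookup) simp
    then have "card (keys g') < card (keys g)" by (simp only: card_Diff1_less[OF finite_keys t(1)])
    moreover have "t \<in> keys g'" using keys_g' less.prems(2) False by blast
    ultimately show ?thesis using less.hyps by blast
  qed (use mt in simp)
qed

definition var_exps :: "'v set \<Rightarrow> 'v set \<Rightarrow> ('v \<Rightarrow>\<^sub>0 nat) set" where
  "var_exps V A = {b \<in> exps V. \<exists>j\<in>A. 0 < lookup b j}"

definition var_prime :: "'v set \<Rightarrow> 'v set \<Rightarrow> ('v, 'k::field) mpoly set" where
  "var_prime V A = mono_ideal V (var_exps V A)"

lemma upper_set_var_exps: "upper_set V (var_exps V A)"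
  unfolding upper_set_def var_exps_def by (auto simp: lookup_add intro: add_pos_nonneg)

lemma not_in_var_exps:
  "b \<in> exps V \<Longrightarrow> b \<notin> var_exps V A \<longleftrightarrow> (\<forall>j\<in>A. lookup b j = 0)"
  by (auto simp: var_exps_def)

lemma var_prime_is_prime: "prime_ideal V (var_prime V A :: ('v::linorder, 'k::field) mpoly set)"
  unfolding prime_ideal_def
proof (intro conjI ballI impI)
  show "is_ideal V (var_prime V A :: ('v, 'k) mpoly set)"
    unfolding var_prime_def by (rule mono_ideal_is_ideal[OF upper_set_var_exps])
  have "(1 :: ('v,'k) mpoly) \<notin> var_prime V A" by (simp add: var_prime_def mono_ideal_def var_exps_def)
  then show "var_prime V A \<noteq> (polys V :: ('v, 'k) mpoly set)" using polys_one by metis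
next
  fix f g :: "('v,'k) mpoly" assume f: "f \<in> polys V" and g: "g \<in> polys V" and fg: "f * g \<in> var_prime V A"
  show "f \<in> var_prime V A \<or> g \<in> var_prime V A"
  proof (rule ccontr)
    let ?Kf = "keys f - var_exps V A" and ?Kg = "keys g - var_exps V A"
    assume "\<not> ?thesis"
    then have "?Kf \<noteq> {}" "?Kg \<noteq> {}" using f g unfolding var_prime_def mono_ideal_def by auto
    then have t: "Max ?Kf \<in> ?Kf" and s: "Max ?Kg \<in> ?Kg" by (meson Max_in finite_Diff finite_keys)+
    have t0: "\<forall>j\<in>A. lookup (Max ?Kf) j = 0"
      using t keys_in_exps[OF f] not_in_var_exps[of "Max ?Kf" V A] by blast
    have s0: "\<forall>j\<in>A. lookup (Max ?Kg) j = 0"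
      using s keys_in_exps[OF g] not_in_var_exps[of "Max ?Kg" V A] by blast
    have "lookup (f * g) (Max ?Kf + Max ?Kg) = lookup f (Max ?Kf) * lookup g (Max ?Kg)"
    proof (rule lookup_mult_unique_decomp)
      fix a b assume a: "a \<in> keys f" and b: "b \<in> keys g" and ab: "a + b = Max ?Kf + Max ?Kg"
      have "lookup a j = 0 \<and> lookup b j = 0" if "j \<in> A" for j
        using that t0 s0 arg_cong[OF ab, of "\<lambda>x. lookup x j"] by (simp add: lookup_add)
      then have "a \<in> ?Kf" "b \<in> ?Kg"
        using a b keys_in_exps[OF f a] keys_in_exps[OF g b] not_in_var_exps[of _ V A] by blast+
      then show "a = Max ?Kf \<and> b = Max ?Kg" using ab by (intro add_eq_add_imp_eq) simp_all
    qed (use t s in auto)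
    then have "Max ?Kf + Max ?Kg \<in> keys (f * g)" using t s by (simp add: in_keys_iff)
    then have "Max ?Kf + Max ?Kg \<in> var_exps V A" using fg unfolding var_prime_def mono_ideal_def by blast
    then show False using t0 s0 by (auto simp: var_exps_def lookup_add)
  qed
qed

lemma var_prime_is_monomial: "monomial_ideal V (var_prime V A :: ('v, 'k::field) mpoly set)"
  unfolding var_prime_def by (rule mono_ideal_is_monomial[OF upper_set_var_exps])

lemma var_in_var_prime: "j \<in> V \<Longrightarrow> (var j :: ('v, 'k::field) mpoly) \<in> var_prime V A \<longleftrightarrow> j \<in> A"
  by (simp add: var_def var_prime_def var_exps_def lookup_single when_def)

lemma inj_on_var_prime: "inj_on (var_prime V :: 'v set \<Rightarrow> ('v, 'k::field) mpoly set) (Pow V)"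
proof (rule inj_onI)
  fix A B assume "A \<in> Pow V" "B \<in> Pow V" and eq: "(var_prime V A :: ('v, 'k) mpoly set) = var_prime V B"
  have "j \<in> A \<longleftrightarrow> j \<in> B" if "j \<in> V" for j
    using var_in_var_prime[OF that, of A, where 'k='k] var_in_var_prime[OF that, of B, where 'k='k] eq
    by simp
  then show "A = B" using \<open>A \<in> Pow V\<close> \<open>B \<in> Pow V\<close> by blast
qed

lemma prime_ideal_var_of_monom:
  assumes P: "prime_ideal V (P :: ('v, 'k::field) mpoly set)"
  shows "b \<in> exps V \<Longrightarrow> monom b \<in> P \<Longrightarrow> \<exists>j\<in>keys b. var j \<in> P"
proof (induction b rule: nat_poly_mapping_induct)
  case zero
  then show ?case using prime_ideal_one[OF P] by (simp add: monom_def)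
next
  case (add_var a j)
  have keys: "keys a \<subseteq> keys (a + single j 1)" "j \<in> keys (a + single j 1)"
    by (auto simp: in_keys_iff lookup_add)
  then have "a \<in> exps V" "single j 1 \<in> exps V"
    using add_var.prems(1) by (auto simp: exps_def)
  moreover have "monom a * var j \<in> P" using add_var.prems(2) by (simp add: var_def monom_mult)
  ultimately have "monom a \<in> P \<or> var j \<in> P"
    using P unfolding prime_ideal_def var_def by simp
  then show ?case using add_var.IH \<open>a \<in> exps V\<close> keys by blast
qed

lemma prime_eq_var_prime:
  assumes P: "prime_ideal V (P :: ('v, 'k::field) mpoly set)"
    and monoms: "\<And>g t. g \<in> P \<Longrightarrow> t \<in> keys g \<Longrightarrow> monom t \<in> P"
  shows "P = var_prime V {j \<in> V. var j \<in> P}"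
proof
  let ?A = "{j \<in> V. var j \<in> P}"
  have J: "is_ideal V P" by (rule prime_ideal_is_ideal[OF P])
  show "P \<subseteq> var_prime V ?A"
  proof
    fix g assume g: "g \<in> P"
    have "t \<in> var_exps V ?A" if t: "t \<in> keys g" for t
    proof -
      have "t \<in> exps V" using t g ideal_subset_polys[OF J] keys_in_exps by blast
      then obtain j where j: "j \<in> keys t" "var j \<in> P"
        using prime_ideal_var_of_monom[OF P _ monoms[OF g t]] by blast
      moreover have "j \<in> V" using j(1) \<open>t \<in> exps V\<close> by (auto simp: exps_def)
      ultimately show ?thesis using \<open>t \<in> exps V\<close> by (auto simp: var_exps_def in_keys_iff)
    qed
    then show "g \<in> var_prime V ?A"
      using g ideal_subset_polys[OF J] by (auto simp: var_prime_def mono_ideal_def)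
  qed
  show "var_prime V ?A \<subseteq> P"
    unfolding var_prime_def
  proof (rule mono_ideal_least[OF J])
    fix b assume "b \<in> var_exps V ?A"
    then obtain j where b: "b \<in> exps V" and j: "j \<in> ?A" "0 < lookup b j"
      by (auto simp: var_exps_def)
    then have "j \<in> keys b" by (simp add: in_keys_iff)
    then have "monom (b - single j 1) * var j = (monom b :: ('v, 'k) mpoly)"
      unfolding var_def monom_mult by (simp only: remove_var)
    moreover have "monom (b - single j 1) * var j \<in> P"
      using j b by (intro ideal_mult_left[OF J]) auto
    ultimately show "monom b \<in> P" by simp
  qed
qed

definition associated_vars :: "'v set \<Rightarrow> ('v \<Rightarrow>\<^sub>0 nat) set \<Rightarrow> 'v set \<Rightarrow> bool" where
  "associated_vars V E A \<longleftrightarrow> A \<subseteq> V \<and> (\<exists>c\<in>exps V. \<forall>b\<in>exps V. c + b \<in> E \<longleftrightarrow> b \<in> var_exps V A)"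

lemma var_prime_in_Ass:
  assumes A: "associated_vars V E A"
  shows "(var_prime V A :: ('v::linorder, 'k::field) mpoly set) \<in> Ass V (mono_ideal V E)"
proof -
  obtain c where c: "c \<in> exps V" and colon: "\<And>b. b \<in> exps V \<Longrightarrow> c + b \<in> E \<longleftrightarrow> b \<in> var_exps V A"
    using A unfolding associated_vars_def by blast
  have "g \<in> var_prime V A \<longleftrightarrow> g * monom c \<in> mono_ideal V E" if g: "g \<in> polys V" for g :: "('v,'k) mpoly"
  proof -
    have "g * monom c \<in> mono_ideal V E \<longleftrightarrow> (\<forall>a\<in>keys g. c + a \<in> E)"
      using monom_mult_in_mono_ideal_iff[OF c g] by (simp add: mult.commute)
    also have "\<dots> \<longleftrightarrow> keys g \<subseteq> var_exps V A"
      using colon keys_in_exps[OF g] by blast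
    finally show ?thesis using g by (simp add: var_prime_def mono_ideal_def)
  qed
  then have "var_prime V A = {g \<in> polys V. g * monom c \<in> (mono_ideal V E :: ('v,'k) mpoly set)}"
    using ideal_subset_polys[OF prime_ideal_is_ideal[OF var_prime_is_prime]] by blast
  then show ?thesis
    unfolding Ass_def using c by (intro CollectI conjI var_prime_is_prime bexI[of _ "monom c"]) simp_all
qed

text \<open>If no \<open>c \<in> K\<close> worked, witnesses \<open>t\<^sub>a \<notin> var_exps V A\<close> with \<open>a + t\<^sub>a \<in> E\<close>
  for \<open>a \<in> K\<close> would add up to a common witness, contradicting the hypothesis.\<close>

lemma key_with_colon_in_var_exps:
  assumes E: "upper_set V E"
    and colon: "\<And>b. b \<in> exps V \<Longrightarrow> (\<forall>a\<in>K. b + a \<in> E) \<Longrightarrow> b \<in> var_exps V A"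
    and K: "finite K"
  shows "\<exists>c\<in>K. \<forall>b\<in>exps V. c + b \<in> E \<longrightarrow> b \<in> var_exps V A"
proof (rule ccontr)
  assume "\<not> ?thesis"
  then obtain t where t: "\<And>a. a \<in> K \<Longrightarrow> t a \<in> exps V \<and> a + t a \<in> E \<and> t a \<notin> var_exps V A"
    by metis
  define T where "T = (\<Sum>a\<in>K. t a)"
  have T: "T \<in> exps V" unfolding T_def using t by (intro exps_sum) blast
  have "T + a \<in> E" if a: "a \<in> K" for a
  proof -
    have "T + a = (a + t a) + (\<Sum>x\<in>K - {a}. t x)"
      unfolding T_def using a K by (simp add: sum.remove algebra_simps)
    moreover have "(\<Sum>x\<in>K - {a}. t x) \<in> exps V" using t by (intro exps_sum) blast
    ultimately show ?thesis using upper_set_add[OF E] t[OF a] by simp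
  qed
  then have "T \<in> var_exps V A" using colon[OF T] by blast
  then obtain j where j: "j \<in> A" "(\<Sum>a\<in>K. lookup (t a) j) \<noteq> 0"
    by (auto simp: var_exps_def T_def lookup_sum)
  then obtain a where "a \<in> K" "lookup (t a) j \<noteq> 0"
    by (meson sum.neutral)
  then show False using t j(1) by (auto simp: var_exps_def)
qed

lemma Ass_imp_associated_vars:
  assumes E: "upper_set V E" and P: "P \<in> Ass V (mono_ideal V E :: ('v::linorder, 'k::field) mpoly set)"
  shows "\<exists>A. associated_vars V E A \<and> P = var_prime V A"
proof -
  obtain f where f: "f \<in> polys V" and P_def: "P = {g \<in> polys V. g * f \<in> mono_ideal V E}"
    and prime: "prime_ideal V P"
    using P unfolding Ass_def by blast
  define A where "A = {j \<in> V. var j \<in> P}"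
  have PA: "P = var_prime V A"
    unfolding A_def by (rule prime_eq_var_prime[OF prime colon_prime_contains_monoms[OF E f P_def prime]])
  have colon: "(\<forall>a\<in>keys f. b + a \<in> E) \<longleftrightarrow> b \<in> var_exps V A" if b: "b \<in> exps V" for b
  proof -
    have "(\<forall>a\<in>keys f. b + a \<in> E) \<longleftrightarrow> monom b \<in> P"
      using monom_mult_in_mono_ideal_iff[OF b f, of E] b P_def by simp
    also have "\<dots> \<longleftrightarrow> b \<in> var_exps V A" using b PA by (simp add: var_prime_def)
    finally show ?thesis .
  qed
  obtain c where c: "c \<in> keys f" and c_colon: "\<forall>b\<in>exps V. c + b \<in> E \<longrightarrow> b \<in> var_exps V A"
    using key_with_colon_in_var_exps[OF E _ finite_keys, of f A] colon by blast
  have "c + b \<in> E \<longleftrightarrow> b \<in> var_exps V A" if "b \<in> exps V" for b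
    using that c c_colon colon[OF that] by (auto simp: add.commute)
  moreover have "A \<subseteq> V" "c \<in> exps V" using c f by (auto simp: A_def keys_in_exps)
  ultimately show ?thesis unfolding associated_vars_def using PA by blast
qed

theorem Ass_mono_ideal:
  assumes "upper_set V E"
  shows "Ass V (mono_ideal V E :: ('v::linorder, 'k::field) mpoly set) = var_prime V ` {A. associated_vars V E A}"
  using Ass_imp_associated_vars[OF assms] var_prime_in_Ass by blast

section \<open>Pulling back exponent sets\<close>

text \<open>Expansion and weighting replace the exponent set of \<open>I\<close> by its preimage under a map
  \<open>\<phi>\<close> from new to old exponents (summing over blocks of variables, respectively dividing by
  the weights). The axioms of \<open>exps_coarsening\<close> make the preimage commute with Minkowski
  sums, hence with powers.\<close>

definition exps_vimage :: "'w set \<Rightarrow> (('w \<Rightarrow>\<^sub>0 nat) \<Rightarrow> ('v \<Rightarrow>\<^sub>0 nat)) \<Rightarrow> ('v \<Rightarrow>\<^sub>0 nat) set \<Rightarrow> ('w \<Rightarrow>\<^sub>0 nat) set" where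
  "exps_vimage W \<phi> E = {u \<in> exps W. \<phi> u \<in> E}"

locale exps_coarsening =
  fixes W :: "'w set" and V :: "'v set" and \<phi> :: "('w \<Rightarrow>\<^sub>0 nat) \<Rightarrow> ('v \<Rightarrow>\<^sub>0 nat)"
  assumes maps_exps: "u \<in> exps W \<Longrightarrow> \<phi> u \<in> exps V"
    and superadditive: "u \<in> exps W \<Longrightarrow> u' \<in> exps W \<Longrightarrow> lookup (\<phi> u + \<phi> u') \<le> lookup (\<phi> (u + u'))"
    and splits: "u \<in> exps W \<Longrightarrow> \<phi> u = e + f \<Longrightarrow>
      \<exists>u\<^sub>1 u\<^sub>2. u\<^sub>1 \<in> exps W \<and> u\<^sub>2 \<in> exps W \<and> u = u\<^sub>1 + u\<^sub>2 \<and> \<phi> u\<^sub>1 = e \<and> \<phi> u\<^sub>2 = f"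
begin

lemma lookup_le_add: "u \<in> exps W \<Longrightarrow> u' \<in> exps W \<Longrightarrow> lookup (\<phi> u) \<le> lookup (\<phi> (u + u'))"
  using superadditive[of u u'] by (auto simp: le_fun_def lookup_add intro: order_trans[rotated])

lemma upper_set_vimage:
  assumes E: "upper_set V E" shows "upper_set W (exps_vimage W \<phi> E)"
  unfolding upper_set_def
proof (intro conjI ballI)
  fix a c assume "a \<in> exps_vimage W \<phi> E" "c \<in> exps W"
  then have a: "a \<in> exps W" "\<phi> a \<in> E" and ac: "a + c \<in> exps W"
    by (auto simp: exps_vimage_def)
  have "\<phi> (a + c) \<in> E" by (rule upper_set_mono[OF E a(2) maps_exps[OF ac] lookup_le_add[OF a(1) \<open>c \<in> exps W\<close>]])
  then show "a + c \<in> exps_vimage W \<phi> E" using ac by (simp add: exps_vimage_def)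
qed (auto simp: exps_vimage_def)

lemma vimage_exps: "exps_vimage W \<phi> (exps V) = exps W"
  unfolding exps_vimage_def using maps_exps by blast

lemma vimage_plus:
  assumes E: "upper_set V E" and F: "upper_set V F"
  shows "exps_vimage W \<phi> E + exps_vimage W \<phi> F = exps_vimage W \<phi> (E + F)"
proof
  show "exps_vimage W \<phi> E + exps_vimage W \<phi> F \<subseteq> exps_vimage W \<phi> (E + F)"
  proof
    fix x assume "x \<in> exps_vimage W \<phi> E + exps_vimage W \<phi> F"
    then obtain u u' where x: "x = u + u'" and u: "u \<in> exps W" "\<phi> u \<in> E" and u': "u' \<in> exps W" "\<phi> u' \<in> F"
      by (auto simp: exps_vimage_def elim: set_plus_elim)
    have "\<phi> u + \<phi> u' \<in> E + F" using u(2) u'(2) by (rule set_plus_intro)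
    then have "\<phi> x \<in> E + F"
      unfolding x by (rule upper_set_mono[OF upper_set_plus[OF E F] _ maps_exps superadditive])
        (use u u' in auto)
    then show "x \<in> exps_vimage W \<phi> (E + F)" using u u' x by (auto simp: exps_vimage_def)
  qed
  show "exps_vimage W \<phi> (E + F) \<subseteq> exps_vimage W \<phi> E + exps_vimage W \<phi> F"
  proof
    fix u assume "u \<in> exps_vimage W \<phi> (E + F)"
    then obtain e f where u: "u \<in> exps W" "\<phi> u = e + f" and ef: "e \<in> E" "f \<in> F"
      by (auto simp: exps_vimage_def elim: set_plus_elim)
    obtain u\<^sub>1 u\<^sub>2 where "u\<^sub>1 \<in> exps W" "u\<^sub>2 \<in> exps W" "u = u\<^sub>1 + u\<^sub>2" "\<phi> u\<^sub>1 = e" "\<phi> u\<^sub>2 = f"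
      using splits[OF u] by blast
    then show "u \<in> exps_vimage W \<phi> E + exps_vimage W \<phi> F"
      using ef by (auto simp: exps_vimage_def intro: set_plus_intro)
  qed
qed

lemma vimage_pow:
  assumes "upper_set V E"
  shows "exps_pow W (exps_vimage W \<phi> E) m = exps_vimage W \<phi> (exps_pow V E m)"
  by (induction m) (simp_all add: vimage_exps vimage_plus[OF assms upper_set_exps_pow[OF assms]])

end

lemma UN_mingens_eq_vimage:
  assumes E: "upper_set V (exps_of V I)" and maps: "\<And>u. u \<in> exps W \<Longrightarrow> \<phi> u \<in> exps V"
  shows "(\<Union>a\<in>mingens V I. {u \<in> exps W. lookup a \<le> lookup (\<phi> u)}) = exps_vimage W \<phi> (exps_of V I)"
proof
  show "(\<Union>a\<in>mingens V I. {u \<in> exps W. lookup a \<le> lookup (\<phi> u)}) \<subseteq> exps_vimage W \<phi> (exps_of V I)"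
  proof
    fix u assume "u \<in> (\<Union>a\<in>mingens V I. {u \<in> exps W. lookup a \<le> lookup (\<phi> u)})"
    then obtain a where "a \<in> exps_of V I" "u \<in> exps W" "lookup a \<le> lookup (\<phi> u)"
      using mingens_subset by blast
    then show "u \<in> exps_vimage W \<phi> (exps_of V I)"
      using upper_set_mono[OF E _ maps] by (simp add: exps_vimage_def)
  qed
  show "exps_vimage W \<phi> (exps_of V I) \<subseteq> (\<Union>a\<in>mingens V I. {u \<in> exps W. lookup a \<le> lookup (\<phi> u)})"
    unfolding exps_vimage_def using mingens_below by blast
qed

section \<open>Weighting\<close>

definition weight_div :: "('v \<Rightarrow> nat) \<Rightarrow> ('v \<Rightarrow>\<^sub>0 nat) \<Rightarrow> ('v \<Rightarrow>\<^sub>0 nat)" where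
  "weight_div w u = Poly_Mapping.mapp (\<lambda>j x. x div w j) u"

lemma lookup_weight_div [simp]: "lookup (weight_div w u) j = lookup u j div w j"
  unfolding weight_div_def by (simp add: lookup_mapp when_def in_keys_iff)

definition weight_mult :: "('v \<Rightarrow> nat) \<Rightarrow> ('v \<Rightarrow>\<^sub>0 nat) \<Rightarrow> ('v \<Rightarrow>\<^sub>0 nat)" where
  "weight_mult w u = Poly_Mapping.mapp (\<lambda>j x. w j * x) u"

lemma lookup_weight_mult [simp]: "lookup (weight_mult w u) j = w j * lookup u j"
  unfolding weight_mult_def by (simp add: lookup_mapp when_def in_keys_iff)

lemma weight_exp_eq_weight_mult: "weight_exp w a = weight_mult w a"
proof (rule poly_mapping_eqI)
  fix j show "lookup (weight_exp w a) j = lookup (weight_mult w a) j"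
    unfolding weight_exp_def
    by (cases "j \<in> keys a") (simp_all add: lookup_sum lookup_single when_def in_keys_iff)
qed

lemma weight_div_in_exps: "u \<in> exps V \<Longrightarrow> weight_div w u \<in> exps V"
  by (rule exps_mono[of _ u]) (simp add: le_fun_def)

lemma weight_mult_in_exps: "a \<in> exps V \<Longrightarrow> weight_mult w a \<in> exps V"
  unfolding exps_def by (auto simp: in_keys_iff)

lemma weight_div_weight_mult:
  assumes "a \<in> exps V" "\<forall>j\<in>V. 0 < w j"
  shows "weight_div w (weight_mult w a) = a"
  by (rule exps_eqI[OF weight_div_in_exps[OF weight_mult_in_exps] assms(1)]) (use assms in simp_all)

lemma le_weight_div_iff:
  assumes "\<forall>j\<in>V. 0 < w j" "a \<in> exps V"
  shows "lookup a \<le> lookup (weight_div w u) \<longleftrightarrow> lookup (weight_mult w a) \<le> lookup u"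
proof -
  have "lookup a j \<le> lookup u j div w j \<longleftrightarrow> w j * lookup a j \<le> lookup u j" for j
    using assms exps_lookup_eq_0[OF assms(2), of j]
    by (cases "j \<in> V") (simp_all add: less_eq_div_iff_mult_less_eq mult.commute)
  then show ?thesis by (simp add: le_fun_def)
qed

lemma exps_coarsening_weight_div:
  assumes w: "\<forall>j\<in>V. 0 < w j" shows "exps_coarsening V V (weight_div w)"
proof
  fix u u' :: "'a \<Rightarrow>\<^sub>0 nat"
  show "lookup (weight_div w u + weight_div w u') \<le> lookup (weight_div w (u + u'))"
    by (simp add: le_fun_def lookup_add) (metis div_add1_eq le_add1)
next
  fix u e f :: "'a \<Rightarrow>\<^sub>0 nat"
  assume u: "u \<in> exps V" and ef: "weight_div w u = e + f"
  then have le_e: "lookup e \<le> lookup (weight_div w u)" by (simp add: le_fun_def lookup_add)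
  have e: "e \<in> exps V" by (rule exps_mono[OF le_e weight_div_in_exps[OF u]])
  have le: "lookup (weight_mult w e) \<le> lookup u" using le_e le_weight_div_iff[OF w e] by simp
  have "weight_div w (u - weight_mult w e) = f"
  proof (rule poly_mapping_eqI)
    fix j
    have j: "lookup u j div w j = lookup e j + lookup f j"
      using arg_cong[OF ef, of "\<lambda>x. lookup x j"] by (simp add: lookup_add)
    show "lookup (weight_div w (u - weight_mult w e)) j = lookup f j"
    proof (cases "w j = 0")
      case False
      have "w j * lookup e j \<le> lookup u j" using le by (simp add: le_fun_def)
      then obtain r where "lookup u j = w j * lookup e j + r" using le_Suc_ex by blast
      then show ?thesis using j False by (simp add: lookup_minus)
    qed (use j in simp)
  qed
  moreover have "u = weight_mult w e + (u - weight_mult w e)" by (rule add_diff_pointwise[OF le, symmetric])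
  ultimately show "\<exists>u\<^sub>1 u\<^sub>2. u\<^sub>1 \<in> exps V \<and> u\<^sub>2 \<in> exps V \<and> u = u\<^sub>1 + u\<^sub>2 \<and>
      weight_div w u\<^sub>1 = e \<and> weight_div w u\<^sub>2 = f"
    using weight_mult_in_exps[OF e] weight_div_weight_mult[OF e w] exps_diff[OF u] by blast
qed (rule weight_div_in_exps)

lemma weighting_eq_mono_ideal:
  assumes I: "monomial_ideal {1..n} (I :: (nat, 'k::field) mpoly set)" and w: "\<forall>j\<in>{1..n}. 0 < w j"
  shows "weighting n w I = mono_ideal {1..n} (exps_vimage {1..n} (weight_div w) (exps_of {1..n} I))"
proof -
  let ?V = "{1..n}" and ?E = "exps_of {1..n} I"
  let ?S = "{monom (weight_mult w a) :: (nat, 'k) mpoly | a. a \<in> mingens ?V I}"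
  have E: "upper_set ?V ?E"
    by (rule upper_set_exps_of) (use I in \<open>simp add: monomial_ideal_def\<close>)
  have S: "?S \<subseteq> mono_ideal ?V (exps_vimage ?V (weight_div w) ?E)"
  proof
    fix x assume "x \<in> ?S"
    then obtain a where x: "x = monom (weight_mult w a)" and "a \<in> mingens ?V I" by blast
    then have a: "a \<in> ?E" using mingens_subset by blast
    then have "a \<in> exps ?V" by (simp add: exps_of_def)
    then show "x \<in> mono_ideal ?V (exps_vimage ?V (weight_div w) ?E)"
      using a w unfolding x by (simp add: exps_vimage_def weight_mult_in_exps weight_div_weight_mult)
  qed
  have "ideal_gen ?V ?S = mono_ideal ?V (exps_vimage ?V (weight_div w) ?E)"
  proof (rule ideal_gen_eq_mono_ideal[OF _ S])
    show "upper_set ?V (exps_vimage ?V (weight_div w) ?E)"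
      by (rule exps_coarsening.upper_set_vimage[OF exps_coarsening_weight_div[OF w] E])
    fix u assume u: "u \<in> exps_vimage ?V (weight_div w) ?E"
    then have "u \<in> (\<Union>a\<in>mingens ?V I. {u \<in> exps ?V. lookup a \<le> lookup (weight_div w u)})"
      using UN_mingens_eq_vimage[where W = ?V and \<phi> = "weight_div w", OF E weight_div_in_exps] by simp
    then obtain g where g: "g \<in> mingens ?V I" "lookup g \<le> lookup (weight_div w u)" by blast
    then have "g \<in> exps ?V" using mingens_subset by (auto simp: exps_of_def)
    then have le: "lookup (weight_mult w g) \<le> lookup u" using g(2) le_weight_div_iff[OF w] by simp
    have gen: "monom (weight_mult w g) \<in> ideal_gen ?V ?S"
      using g(1) by (intro subsetD[OF ideal_gen_superset]) blast
    have "?S \<subseteq> polys ?V" using S by (auto simp: mono_ideal_def)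
    moreover have "u \<in> exps ?V" using u by (simp add: exps_vimage_def)
    ultimately show "monom u \<in> ideal_gen ?V ?S"
      using ideal_monom_mono[OF ideal_gen_is_ideal gen _ le] by blast
  qed
  then show ?thesis unfolding weighting_def weight_exp_eq_weight_mult .
qed

lemma var_exps_weight_mult_iff:
  assumes "\<forall>j\<in>V. 0 < w j" "A \<subseteq> V" "b \<in> exps V"
  shows "weight_mult w b \<in> var_exps V A \<longleftrightarrow> b \<in> var_exps V A"
  using assms by (auto simp: var_exps_def weight_mult_in_exps)

lemma associated_vars_of_weight_div_vimage:
  assumes w: "\<forall>j\<in>V. 0 < w j" and A: "associated_vars V (exps_vimage V (weight_div w) E) A"
  shows "associated_vars V E A"
proof -
  obtain c where AV: "A \<subseteq> V" and c: "c \<in> exps V"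
    and colon: "\<And>b. b \<in> exps V \<Longrightarrow> c + b \<in> exps_vimage V (weight_div w) E \<longleftrightarrow> b \<in> var_exps V A"
    using A unfolding associated_vars_def by blast
  have "weight_div w c + b \<in> E \<longleftrightarrow> b \<in> var_exps V A" if b: "b \<in> exps V" for b
  proof -
    have "weight_div w (c + weight_mult w b) = weight_div w c + b"
    proof (rule poly_mapping_eqI)
      fix j show "lookup (weight_div w (c + weight_mult w b)) j = lookup (weight_div w c + b) j"
        using w exps_lookup_eq_0[OF b, of j] by (cases "j \<in> V") (simp_all add: lookup_add)
    qed
    then have "weight_div w c + b \<in> E \<longleftrightarrow> c + weight_mult w b \<in> exps_vimage V (weight_div w) E"
      using c b by (simp add: exps_vimage_def exps_add weight_mult_in_exps)
    also have "\<dots> \<longleftrightarrow> b \<in> var_exps V A"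
      using colon[OF weight_mult_in_exps[OF b]] var_exps_weight_mult_iff[OF w AV b] by simp
    finally show ?thesis .
  qed
  then show ?thesis unfolding associated_vars_def using AV weight_div_in_exps[OF c] by blast
qed

text \<open>With the offset \<open>w\<^sub>j - 1\<close>, the quotient \<open>(w\<^sub>j c\<^sub>j + w\<^sub>j - 1 + b\<^sub>j) div w\<^sub>j\<close> is
  \<open>c\<^sub>j\<close> plus the rounded-up quotient \<open>b\<^sub>j / w\<^sub>j\<close>, which is positive exactly when \<open>b\<^sub>j\<close> is.\<close>

lemma associated_vars_weight_div_vimage:
  assumes V: "finite V" and w: "\<forall>j\<in>V. 0 < w j" and A: "associated_vars V E A"
  shows "associated_vars V (exps_vimage V (weight_div w) E) A"
proof -
  obtain c where AV: "A \<subseteq> V" and c: "c \<in> exps V"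
    and colon: "\<And>b. b \<in> exps V \<Longrightarrow> c + b \<in> E \<longleftrightarrow> b \<in> var_exps V A"
    using A unfolding associated_vars_def by blast
  let ?ofs = "vec_on V (\<lambda>j. w j - 1)"
  let ?c' = "weight_mult w c + ?ofs"
  have c': "?c' \<in> exps V" using c by (intro exps_add weight_mult_in_exps vec_on_in_exps)
  have "?c' + b \<in> exps_vimage V (weight_div w) E \<longleftrightarrow> b \<in> var_exps V A" if b: "b \<in> exps V" for b
  proof -
    let ?b = "weight_div w (b + ?ofs)"
    have b': "?b \<in> exps V" using b by (intro weight_div_in_exps exps_add vec_on_in_exps)
    have "weight_div w (?c' + b) = c + ?b"
    proof (rule exps_eqI)
      fix j assume j: "j \<in> V"
      then have "lookup (?c' + b) j = (lookup b j + (w j - 1)) + w j * lookup c j"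
        using V by (simp add: lookup_add lookup_vec_on)
      then have "lookup (weight_div w (?c' + b)) j = ((lookup b j + (w j - 1)) + w j * lookup c j) div w j"
        by simp
      also have "\<dots> = lookup c j + (lookup b j + (w j - 1)) div w j" using w j by simp
      also have "\<dots> = lookup (c + ?b) j" using V j by (simp add: lookup_add lookup_vec_on)
      finally show "lookup (weight_div w (?c' + b)) j = lookup (c + ?b) j" .
    qed (use c c' b b' in \<open>auto intro: weight_div_in_exps\<close>)
    then have "?c' + b \<in> exps_vimage V (weight_div w) E \<longleftrightarrow> ?b \<in> var_exps V A"
      using colon[OF b'] c' b by (simp add: exps_vimage_def exps_add)
    also have "\<dots> \<longleftrightarrow> b \<in> var_exps V A"
    proof -
      have "0 < (x + (w j - 1)) div w j \<longleftrightarrow> 0 < x" if "j \<in> V" for j x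
      proof -
        have "0 < w j" using w that by blast
        then show ?thesis by (simp add: div_greater_zero_iff) linarith
      qed
      then show ?thesis using AV b b' V by (auto simp: var_exps_def lookup_add lookup_vec_on)
    qed
    finally show ?thesis .
  qed
  then show ?thesis unfolding associated_vars_def using AV c' by blast
qed

section \<open>Expansion\<close>

lemma mem_exp_vars: "(j, k) \<in> exp_vars n i \<longleftrightarrow> j \<in> {1..n} \<and> k \<in> {1..i j}"
  unfolding exp_vars_def by auto

lemma finite_exp_vars: "finite (exp_vars n i)"
proof -
  have "exp_vars n i = Sigma {1..n} (\<lambda>j. {1..i j})" unfolding exp_vars_def by auto
  then show ?thesis by simp
qed

definition block_deg :: "(nat \<Rightarrow> nat) \<Rightarrow> nat \<Rightarrow> (nat \<times> nat \<Rightarrow>\<^sub>0 nat) \<Rightarrow> nat" where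
  "block_deg i j u = (\<Sum>k\<in>{1..i j}. lookup u (j, k))"

definition collapse :: "nat \<Rightarrow> (nat \<Rightarrow> nat) \<Rightarrow> (nat \<times> nat \<Rightarrow>\<^sub>0 nat) \<Rightarrow> (nat \<Rightarrow>\<^sub>0 nat)" where
  "collapse n i u = vec_on {1..n} (\<lambda>j. block_deg i j u)"

lemma lookup_collapse: "lookup (collapse n i u) j = (if j \<in> {1..n} then block_deg i j u else 0)"
  unfolding collapse_def by (simp add: lookup_vec_on)

lemma collapse_in_exps: "collapse n i u \<in> exps {1..n}"
  unfolding collapse_def by (rule vec_on_in_exps)

lemma block_deg_add: "block_deg i j (u + v) = block_deg i j u + block_deg i j v"
  unfolding block_deg_def by (simp add: lookup_add sum.distrib)

lemma collapse_add: "collapse n i (u + v) = collapse n i u + collapse n i v"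
  by (rule poly_mapping_eqI) (simp add: lookup_add lookup_collapse block_deg_add)

lemma collapse_zero: "collapse n i 0 = 0"
  by (rule poly_mapping_eqI) (simp add: lookup_collapse block_deg_def)

lemma block_deg_pos_iff: "0 < block_deg i j u \<longleftrightarrow> (\<exists>k\<in>{1..i j}. 0 < lookup u (j, k))"
  unfolding block_deg_def by (simp add: sum_eq_0_iff flip: neq0_conv)

lemma block_deg_single:
  "block_deg i j (single (j', k) c) = (if j' = j \<and> k \<in> {1..i j} then c else 0)"
  unfolding block_deg_def lookup_single when_def by (cases "j' = j") simp_all

lemma collapse_single:
  "(j, k) \<in> exp_vars n i \<Longrightarrow> collapse n i (single (j, k) 1) = single j 1"
  by (rule poly_mapping_eqI) (auto simp: lookup_collapse block_deg_single lookup_single when_def mem_exp_vars)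

lemma collapse_split_le:
  assumes u: "u \<in> exps (exp_vars n i)"
  shows "lookup e \<le> lookup (collapse n i u) \<Longrightarrow>
    \<exists>u\<^sub>1\<in>exps (exp_vars n i). lookup u\<^sub>1 \<le> lookup u \<and> collapse n i u\<^sub>1 = e"
proof (induction e rule: nat_poly_mapping_induct)
  case zero
  then show ?case by (intro bexI[of _ 0]) (simp_all add: collapse_zero le_fun_def)
next
  case (add_var e j)
  have "lookup e \<le> lookup (e + single j 1)" by (simp add: le_fun_def lookup_add)
  then obtain u\<^sub>1 where u\<^sub>1: "u\<^sub>1 \<in> exps (exp_vars n i)" "lookup u\<^sub>1 \<le> lookup u" "collapse n i u\<^sub>1 = e"
    using add_var.IH add_var.prems order_trans by blast
  have j_lt: "lookup e j < lookup (collapse n i u) j"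
    using add_var.prems[unfolded le_fun_def, rule_format, of j] by (simp add: lookup_add)
  then have j: "j \<in> {1..n}" by (auto simp: lookup_collapse split: if_splits)
  have "block_deg i j u = block_deg i j u\<^sub>1 + block_deg i j (u - u\<^sub>1)"
    by (simp only: block_deg_add[symmetric] add_diff_pointwise[OF u\<^sub>1(2)])
  moreover have "block_deg i j u\<^sub>1 = lookup e j" using u\<^sub>1(3) j by (auto simp: lookup_collapse)
  ultimately have "0 < block_deg i j (u - u\<^sub>1)" using j j_lt by (simp add: lookup_collapse)
  then obtain k where k: "k \<in> {1..i j}" "0 < lookup (u - u\<^sub>1) (j, k)" by (auto simp: block_deg_pos_iff)
  then have jk: "(j, k) \<in> exp_vars n i" using j by (simp add: mem_exp_vars)
  show ?case
  proof (intro bexI conjI)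
    show "u\<^sub>1 + single (j, k) 1 \<in> exps (exp_vars n i)" using u\<^sub>1(1) jk by (simp add: exps_add)
    show "lookup (u\<^sub>1 + single (j, k) 1) \<le> lookup u"
      using u\<^sub>1(2) k(2) by (auto simp: le_fun_def lookup_add lookup_single lookup_minus when_def)
    show "collapse n i (u\<^sub>1 + single (j, k) 1) = e + single j 1"
      unfolding collapse_add collapse_single[OF jk] u\<^sub>1(3) ..
  qed
qed

lemma exps_coarsening_collapse: "exps_coarsening (exp_vars n i) {1..n} (collapse n i)"
proof
  fix u u' :: "nat \<times> nat \<Rightarrow>\<^sub>0 nat"
  show "lookup (collapse n i u + collapse n i u') \<le> lookup (collapse n i (u + u'))"
    by (simp add: collapse_add)
next
  fix u e f assume u: "u \<in> exps (exp_vars n i)" and ef: "collapse n i u = e + f"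
  then have "lookup e \<le> lookup (collapse n i u)" by (simp add: le_fun_def lookup_add)
  then obtain u\<^sub>1 where u\<^sub>1: "u\<^sub>1 \<in> exps (exp_vars n i)" "lookup u\<^sub>1 \<le> lookup u" "collapse n i u\<^sub>1 = e"
    using collapse_split_le[OF u] by blast
  have "u = u\<^sub>1 + (u - u\<^sub>1)" by (simp add: add_diff_pointwise[OF u\<^sub>1(2)])
  then have "collapse n i (u - u\<^sub>1) = f"
    using ef u\<^sub>1(3) by (metis add_left_cancel collapse_add)
  then show "\<exists>u\<^sub>1 u\<^sub>2. u\<^sub>1 \<in> exps (exp_vars n i) \<and> u\<^sub>2 \<in> exps (exp_vars n i) \<and> u = u\<^sub>1 + u\<^sub>2 \<and>
      collapse n i u\<^sub>1 = e \<and> collapse n i u\<^sub>2 = f"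
    using u\<^sub>1 u \<open>u = u\<^sub>1 + (u - u\<^sub>1)\<close> exps_diff by blast
qed (rule collapse_in_exps)

definition block_deg_ge :: "nat \<Rightarrow> (nat \<Rightarrow> nat) \<Rightarrow> nat \<Rightarrow> nat \<Rightarrow> (nat \<times> nat \<Rightarrow>\<^sub>0 nat) set" where
  "block_deg_ge n i j m = {u \<in> exps (exp_vars n i). m \<le> block_deg i j u}"

definition block_degs_ge :: "nat \<Rightarrow> (nat \<Rightarrow> nat) \<Rightarrow> (nat \<Rightarrow>\<^sub>0 nat) \<Rightarrow> nat set \<Rightarrow> (nat \<times> nat \<Rightarrow>\<^sub>0 nat) set" where
  "block_degs_ge n i a S = {u \<in> exps (exp_vars n i). \<forall>j\<in>S. lookup a j \<le> block_deg i j u}"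

lemma upper_set_block_deg_ge: "upper_set (exp_vars n i) (block_deg_ge n i j m)"
  unfolding upper_set_def block_deg_ge_def by (auto simp: exps_add block_deg_add)

lemma upper_set_block_degs_ge: "upper_set (exp_vars n i) (block_degs_ge n i a S)"
  unfolding upper_set_def block_degs_ge_def by (auto simp: exps_add block_deg_add intro: trans_le_add1)

lemma split_off_var:
  assumes u: "u \<in> exps (exp_vars n i)" and k: "0 < lookup u (j, k)"
  shows "(j, k) \<in> exp_vars n i" and "u = single (j, k) 1 + (u - single (j, k) 1)"
proof -
  show "(j, k) \<in> exp_vars n i" using u k by (auto simp: exps_def in_keys_iff)
  have "lookup (single (j, k) 1) \<le> lookup u" using k by (auto simp: le_fun_def lookup_single when_def)
  then show "u = single (j, k) 1 + (u - single (j, k) 1)" by (simp add: add_diff_pointwise)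
qed

lemma exp_prime_eq_mono_ideal:
  assumes j: "j \<in> {1..n}"
  shows "(exp_prime n i j :: (nat \<times> nat, 'k::field) mpoly set) = mono_ideal (exp_vars n i) (block_deg_ge n i j 1)"
  unfolding exp_prime_def
proof (rule ideal_gen_eq_mono_ideal[OF upper_set_block_deg_ge])
  let ?S = "{var (j, k) :: (nat \<times> nat, 'k) mpoly |k. k \<in> {1..i j}}"
  show S: "?S \<subseteq> mono_ideal (exp_vars n i) (block_deg_ge n i j 1)"
    using j by (auto simp: var_def block_deg_ge_def block_deg_single mem_exp_vars)
  fix u assume "u \<in> block_deg_ge n i j 1"
  then obtain k where u: "u \<in> exps (exp_vars n i)" and k: "k \<in> {1..i j}" "0 < lookup u (j, k)"
    by (auto simp: block_deg_ge_def Suc_le_eq block_deg_pos_iff)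
  have "var (j, k) \<in> ideal_gen (exp_vars n i) ?S" using k(1) by (intro subsetD[OF ideal_gen_superset]) blast
  moreover have "?S \<subseteq> polys (exp_vars n i)" using S by (auto simp: mono_ideal_def)
  moreover have "lookup (single (j, k) 1) \<le> lookup u" using k(2) by (auto simp: le_fun_def lookup_single when_def)
  ultimately show "monom u \<in> ideal_gen (exp_vars n i) ?S"
    using ideal_monom_mono[OF ideal_gen_is_ideal _ u] unfolding var_def by blast
qed

lemma exps_pow_block_deg_ge: "exps_pow (exp_vars n i) (block_deg_ge n i j 1) m = block_deg_ge n i j m"
proof (induction m)
  case 0
  then show ?case by (simp add: block_deg_ge_def)
next
  case (Suc m)
  have "block_deg_ge n i j 1 + block_deg_ge n i j m = block_deg_ge n i j (Suc m)"
  proof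
    show "block_deg_ge n i j 1 + block_deg_ge n i j m \<subseteq> block_deg_ge n i j (Suc m)"
      by (auto simp: block_deg_ge_def exps_add block_deg_add elim!: set_plus_elim)
    show "block_deg_ge n i j (Suc m) \<subseteq> block_deg_ge n i j 1 + block_deg_ge n i j m"
    proof
      fix u assume "u \<in> block_deg_ge n i j (Suc m)"
      then have u: "u \<in> exps (exp_vars n i)" and deg: "Suc m \<le> block_deg i j u"
        by (auto simp: block_deg_ge_def)
      then have "0 < block_deg i j u" by simp
      then obtain k where k: "k \<in> {1..i j}" "0 < lookup u (j, k)"
        by (auto simp: block_deg_pos_iff)
      note split = split_off_var[OF u k(2)]
      have "block_deg i j u = 1 + block_deg i j (u - single (j, k) 1)"
        using k(1) by (subst split(2)) (simp add: block_deg_add block_deg_single)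
      then have "u - single (j, k) 1 \<in> block_deg_ge n i j m"
        using deg u by (simp add: block_deg_ge_def exps_diff)
      moreover have "single (j, k) 1 \<in> block_deg_ge n i j 1"
        using split(1) k(1) by (simp add: block_deg_ge_def block_deg_single)
      ultimately show "u \<in> block_deg_ge n i j 1 + block_deg_ge n i j m"
        by (subst split(2)) (rule set_plus_intro)
    qed
  qed
  then show ?case using Suc by simp
qed

lemma block_deg_ge_plus_block_degs_ge:
  assumes j: "j \<in> {1..n}" "j \<notin> S"
  shows "block_deg_ge n i j (lookup a j) + block_degs_ge n i a S = block_degs_ge n i a (insert j S)"
proof
  show "block_deg_ge n i j (lookup a j) + block_degs_ge n i a S \<subseteq> block_degs_ge n i a (insert j S)"
    by (auto simp: block_deg_ge_def block_degs_ge_def exps_add block_deg_add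
        intro: trans_le_add1 trans_le_add2 elim!: set_plus_elim)
  show "block_degs_ge n i a (insert j S) \<subseteq> block_deg_ge n i j (lookup a j) + block_degs_ge n i a S"
  proof
    fix u assume u: "u \<in> block_degs_ge n i a (insert j S)"
    let ?V = "exp_vars n i"
    define x where "x = vec_on ?V (\<lambda>q. if fst q = j then lookup u q else 0)"
    have lookup_x: "lookup x q = (if q \<in> ?V \<and> fst q = j then lookup u q else 0)" for q
      unfolding x_def by (simp add: lookup_vec_on finite_exp_vars)
    have le: "lookup x \<le> lookup u" by (simp add: le_fun_def lookup_x)
    have "block_deg i j x = block_deg i j u"
      unfolding block_deg_def by (rule sum.cong) (use j in \<open>auto simp: lookup_x mem_exp_vars\<close>)
    then have "x \<in> block_deg_ge n i j (lookup a j)"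
      using u unfolding block_deg_ge_def block_degs_ge_def x_def by (simp add: vec_on_in_exps)
    moreover have "u - x \<in> block_degs_ge n i a S"
    proof -
      have "block_deg i j' (u - x) = block_deg i j' u" if "j' \<in> S" for j'
      proof -
        have "block_deg i j' x = 0" using that j by (simp add: block_deg_def lookup_x) blast
        then show ?thesis
          using block_deg_add[of i j' x "u - x"] by (simp add: add_diff_pointwise[OF le])
      qed
      then show ?thesis using u by (simp add: block_degs_ge_def exps_diff)
    qed
    ultimately show "u \<in> block_deg_ge n i j (lookup a j) + block_degs_ge n i a S"
      by (subst add_diff_pointwise[OF le, symmetric]) (rule set_plus_intro)
  qed
qed

lemma exp_term_foldr_eq_mono_ideal:
  assumes "distinct js" "set js \<subseteq> {1..n}"
  shows "foldr (\<lambda>j J. ideal_prod (exp_vars n i)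
       (ideal_pow (exp_vars n i) (exp_prime n i j) (lookup a j)) J) js (polys (exp_vars n i))
    = (mono_ideal (exp_vars n i) (block_degs_ge n i a (set js)) :: (nat \<times> nat, 'k::field) mpoly set)"
  using assms
proof (induction js)
  case Nil
  then show ?case by (simp add: block_degs_ge_def mono_ideal_exps)
next
  case (Cons j js)
  then have j: "j \<in> {1..n}" "j \<notin> set js" by auto
  have "ideal_pow (exp_vars n i) (exp_prime n i j :: (nat \<times> nat, 'k) mpoly set) (lookup a j)
      = mono_ideal (exp_vars n i) (block_deg_ge n i j (lookup a j))"
    unfolding exp_prime_eq_mono_ideal[OF j(1)] ideal_pow_mono_ideal[OF upper_set_block_deg_ge]
      exps_pow_block_deg_ge ..
  then show ?case
    using Cons j block_deg_ge_plus_block_degs_ge[OF j]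
    by (simp add: ideal_prod_mono_ideal[OF upper_set_block_deg_ge upper_set_block_degs_ge])
qed

lemma exp_term_eq_mono_ideal:
  "(exp_term n i a :: (nat \<times> nat, 'k::field) mpoly set) = mono_ideal (exp_vars n i) (block_degs_ge n i a {1..n})"
proof -
  have "(exp_term n i a :: (nat \<times> nat, 'k) mpoly set) =
      mono_ideal (exp_vars n i) (block_degs_ge n i a (set [1..<Suc n]))"
    unfolding exp_term_def by (rule exp_term_foldr_eq_mono_ideal) auto
  also have "set [1..<Suc n] = {1..n}" by auto
  finally show ?thesis .
qed

lemma block_degs_ge_eq:
  "a \<in> exps {1..n} \<Longrightarrow> block_degs_ge n i a {1..n} = {u \<in> exps (exp_vars n i). lookup a \<le> lookup (collapse n i u)}"
  unfolding block_degs_ge_def le_fun_def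
  by (auto simp: lookup_collapse dest: exps_lookup_eq_0)

lemma expansion_eq_mono_ideal:
  assumes I: "monomial_ideal {1..n} (I :: (nat,'k::field) mpoly set)"
  shows "(expansion n i I :: (nat \<times> nat, 'k) mpoly set) =
    mono_ideal (exp_vars n i) (exps_vimage (exp_vars n i) (collapse n i) (exps_of {1..n} I))"
proof -
  have E: "upper_set {1..n} (exps_of {1..n} I)"
    by (rule upper_set_exps_of) (use I in \<open>simp add: monomial_ideal_def\<close>)
  have "(expansion n i I :: (nat \<times> nat, 'k) mpoly set) =
      ideal_gen (exp_vars n i) (\<Union>a\<in>mingens {1..n} I. mono_ideal (exp_vars n i) (block_degs_ge n i a {1..n}))"
    unfolding expansion_def exp_term_eq_mono_ideal ..
  also have "\<dots> = mono_ideal (exp_vars n i) (\<Union>a\<in>mingens {1..n} I. block_degs_ge n i a {1..n})"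
    by (rule ideal_gen_UN_mono_ideal) (rule upper_set_block_degs_ge)
  also have "(\<Union>a\<in>mingens {1..n} I. block_degs_ge n i a {1..n}) =
      (\<Union>a\<in>mingens {1..n} I. {u \<in> exps (exp_vars n i). lookup a \<le> lookup (collapse n i u)})"
    by (intro SUP_cong refl block_degs_ge_eq) (use mingens_subset in \<open>auto simp: exps_of_def\<close>)
  also have "\<dots> = exps_vimage (exp_vars n i) (collapse n i) (exps_of {1..n} I)"
    by (rule UN_mingens_eq_vimage[OF E collapse_in_exps])
  finally show ?thesis .
qed

definition blocks :: "nat \<Rightarrow> (nat \<Rightarrow> nat) \<Rightarrow> nat set \<Rightarrow> (nat \<times> nat) set" where
  "blocks n i A = {q \<in> exp_vars n i. fst q \<in> A}"

definition embed_first :: "nat \<Rightarrow> (nat \<Rightarrow> nat) \<Rightarrow> (nat \<Rightarrow>\<^sub>0 nat) \<Rightarrow> (nat \<times> nat \<Rightarrow>\<^sub>0 nat)" where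
  "embed_first n i c = vec_on (exp_vars n i) (\<lambda>q. if snd q = 1 then lookup c (fst q) else 0)"

lemma lookup_embed_first:
  "lookup (embed_first n i c) q = (if q \<in> exp_vars n i \<and> snd q = 1 then lookup c (fst q) else 0)"
  unfolding embed_first_def by (simp add: lookup_vec_on finite_exp_vars)

lemma embed_first_in_exps: "embed_first n i c \<in> exps (exp_vars n i)"
  unfolding embed_first_def by (rule vec_on_in_exps)

lemma collapse_embed_first:
  assumes c: "c \<in> exps {1..n}" and i: "\<forall>j\<in>{1..n}. 0 < i j"
  shows "collapse n i (embed_first n i c) = c"
proof (rule exps_eqI[OF collapse_in_exps c])
  fix j assume j: "j \<in> {1..n}"
  then have "1 \<in> {1..i j}" using i by (simp add: Suc_le_eq)
  then have "block_deg i j (embed_first n i c) = lookup c j"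
    unfolding block_deg_def using j by (simp add: lookup_embed_first mem_exp_vars if_distrib cong: if_cong)
  then show "lookup (collapse n i (embed_first n i c)) j = lookup c j"
    using j by (simp add: lookup_collapse)
qed

lemma blocks_eq_Sigma: "A \<subseteq> {1..n} \<Longrightarrow> blocks n i A = Sigma A (\<lambda>j. {1..i j})"
  unfolding blocks_def exp_vars_def by auto

lemma var_exps_collapse_iff:
  assumes A: "A \<subseteq> {1..n}" and b: "b \<in> exps (exp_vars n i)"
  shows "collapse n i b \<in> var_exps {1..n} A \<longleftrightarrow> b \<in> var_exps (exp_vars n i) (blocks n i A)"
proof -
  have "collapse n i b \<in> var_exps {1..n} A \<longleftrightarrow> (\<exists>j\<in>A. 0 < lookup (collapse n i b) j)"
    using collapse_in_exps[of n i b] by (simp add: var_exps_def)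
  also have "\<dots> \<longleftrightarrow> (\<exists>j\<in>A. 0 < block_deg i j b)"
    using A by (intro bex_cong) (auto simp: lookup_collapse)
  also have "\<dots> \<longleftrightarrow> b \<in> var_exps (exp_vars n i) (blocks n i A)"
    using b by (simp add: var_exps_def blocks_eq_Sigma[OF A] block_deg_pos_iff)
  finally show ?thesis .
qed

lemma associated_vars_blocks:
  assumes i: "\<forall>j\<in>{1..n}. 0 < i j" and A: "associated_vars {1..n} E A"
  shows "associated_vars (exp_vars n i) (exps_vimage (exp_vars n i) (collapse n i) E) (blocks n i A)"
proof -
  obtain c where AV: "A \<subseteq> {1..n}" and c: "c \<in> exps {1..n}"
    and colon: "\<And>b. b \<in> exps {1..n} \<Longrightarrow> c + b \<in> E \<longleftrightarrow> b \<in> var_exps {1..n} A"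
    using A unfolding associated_vars_def by blast
  have "embed_first n i c + b \<in> exps_vimage (exp_vars n i) (collapse n i) E \<longleftrightarrow>
      b \<in> var_exps (exp_vars n i) (blocks n i A)" if b: "b \<in> exps (exp_vars n i)" for b
    using colon[OF collapse_in_exps] var_exps_collapse_iff[OF AV b] b embed_first_in_exps
    by (simp add: exps_vimage_def collapse_add collapse_embed_first[OF c i] exps_add)
  then show ?thesis
    unfolding associated_vars_def blocks_def using embed_first_in_exps by blast
qed

lemma var_exps_embed_first_iff:
  assumes i: "\<forall>j\<in>{1..n}. 0 < i j" and A: "A \<subseteq> {1..n}" and b: "b \<in> exps {1..n}"
  shows "embed_first n i b \<in> var_exps (exp_vars n i) (blocks n i A) \<longleftrightarrow> b \<in> var_exps {1..n} A"
proof -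
  have "embed_first n i b \<in> var_exps (exp_vars n i) (blocks n i A) \<longleftrightarrow>
      (\<exists>j\<in>A. \<exists>k\<in>{1..i j}. 0 < lookup (embed_first n i b) (j, k))"
    by (simp add: var_exps_def embed_first_in_exps blocks_eq_Sigma[OF A])
  also have "\<dots> \<longleftrightarrow> (\<exists>j\<in>A. 0 < lookup b j)"
  proof (rule bex_cong[OF refl])
    fix j assume "j \<in> A"
    then have "j \<in> {1..n}" "1 \<in> {1..i j}" using A i by (auto simp: Suc_le_eq)
    then show "(\<exists>k\<in>{1..i j}. 0 < lookup (embed_first n i b) (j, k)) \<longleftrightarrow> 0 < lookup b j"
      by (auto simp: lookup_embed_first mem_exp_vars)
  qed
  also have "\<dots> \<longleftrightarrow> b \<in> var_exps {1..n} A" using b by (simp add: var_exps_def)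
  finally show ?thesis .
qed

text \<open>Adding one variable of block \<open>j\<close> changes the collapsed exponent in the same way,
  whichever variable of the block it is; so the set \<open>B\<close> is a union of blocks.\<close>

lemma associated_vars_collapse_vimage_eq_blocks:
  assumes i: "\<forall>j\<in>{1..n}. 0 < i j"
    and B: "associated_vars (exp_vars n i) (exps_vimage (exp_vars n i) (collapse n i) E) B"
  shows "B = blocks n i {j \<in> {1..n}. (j, 1) \<in> B}"
proof -
  let ?V' = "exp_vars n i" and ?E' = "exps_vimage (exp_vars n i) (collapse n i) E"
  obtain u where BV: "B \<subseteq> ?V'" and u: "u \<in> exps ?V'"
    and colon: "\<And>b. b \<in> exps ?V' \<Longrightarrow> u + b \<in> ?E' \<longleftrightarrow> b \<in> var_exps ?V' B"
    using B unfolding associated_vars_def by blast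
  have in_B: "q \<in> B \<longleftrightarrow> collapse n i u + single (fst q) 1 \<in> E" if q: "q \<in> ?V'" for q
  proof -
    obtain j k where q_eq: "q = (j, k)" by (cases q)
    have "q \<in> B \<longleftrightarrow> single q 1 \<in> var_exps ?V' B"
      using q by (auto simp: var_exps_def lookup_single when_def)
    also have "\<dots> \<longleftrightarrow> u + single q 1 \<in> ?E'" using colon q by simp
    also have "collapse n i (u + single q 1) = collapse n i u + single (fst q) 1"
      unfolding q_eq collapse_add collapse_single[OF q[unfolded q_eq]] fst_conv ..
    then have "u + single q 1 \<in> ?E' \<longleftrightarrow> collapse n i u + single (fst q) 1 \<in> E"
      using u q by (simp add: exps_vimage_def exps_add)
    finally show ?thesis .
  qed
  show ?thesis
  proof (rule set_eqI)
    fix q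
    show "q \<in> B \<longleftrightarrow> q \<in> blocks n i {j \<in> {1..n}. (j, 1) \<in> B}"
    proof (cases "q \<in> ?V'")
      case True
      then have "(fst q, 1) \<in> ?V'" using i by (cases q) (auto simp: mem_exp_vars)
      then show ?thesis using True in_B[OF True] in_B[of "(fst q, 1)"]
        by (cases q) (auto simp: blocks_def mem_exp_vars)
    qed (use BV in \<open>auto simp: blocks_def\<close>)
  qed
qed

lemma associated_vars_collapse_vimage:
  assumes i: "\<forall>j\<in>{1..n}. 0 < i j"
    and B: "associated_vars (exp_vars n i) (exps_vimage (exp_vars n i) (collapse n i) E) B"
  shows "\<exists>A. B = blocks n i A \<and> associated_vars {1..n} E A"
proof -
  let ?V' = "exp_vars n i" and ?E' = "exps_vimage (exp_vars n i) (collapse n i) E"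
  define A where "A = {j \<in> {1..n}. (j, 1) \<in> B}"
  have B_eq: "B = blocks n i A"
    unfolding A_def by (rule associated_vars_collapse_vimage_eq_blocks[OF i B])
  obtain u where u: "u \<in> exps ?V'"
    and colon: "\<And>b. b \<in> exps ?V' \<Longrightarrow> u + b \<in> ?E' \<longleftrightarrow> b \<in> var_exps ?V' B"
    using B unfolding associated_vars_def by blast
  have "collapse n i u + b \<in> E \<longleftrightarrow> b \<in> var_exps {1..n} A" if b: "b \<in> exps {1..n}" for b
  proof -
    have "collapse n i u + b \<in> E \<longleftrightarrow> u + embed_first n i b \<in> ?E'"
      using u by (simp add: exps_vimage_def exps_add embed_first_in_exps collapse_add collapse_embed_first[OF b i])
    also have "\<dots> \<longleftrightarrow> embed_first n i b \<in> var_exps ?V' (blocks n i A)"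
      unfolding B_eq[symmetric] by (rule colon[OF embed_first_in_exps])
    also have "\<dots> \<longleftrightarrow> b \<in> var_exps {1..n} A"
      by (rule var_exps_embed_first_iff[OF i _ b]) (unfold A_def, blast)
    finally show ?thesis .
  qed
  moreover have "A \<subseteq> {1..n}" unfolding A_def by blast
  ultimately have "associated_vars {1..n} E A"
    unfolding associated_vars_def using collapse_in_exps by blast
  with B_eq show ?thesis by blast
qed

lemma inj_on_blocks:
  assumes i: "\<forall>j\<in>{1..n}. 0 < i j" shows "inj_on (blocks n i) (Pow {1..n})"
proof (rule inj_onI)
  fix A A' assume "A \<in> Pow {1..n}" "A' \<in> Pow {1..n}" "blocks n i A = blocks n i A'"
  moreover have "j \<in> X \<longleftrightarrow> (j, 1) \<in> blocks n i X" if "j \<in> {1..n}" for j X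
    using that i by (auto simp: blocks_def mem_exp_vars Suc_le_eq)
  ultimately show "A = A'" by blast
qed

section \<open>Nearly copersistence\<close>

definition nearly_decreasing :: "(nat \<Rightarrow> 'a set) \<Rightarrow> bool" where
  "nearly_decreasing S \<longleftrightarrow> (\<exists>s>0. \<exists>a.
     (\<forall>m. 1 \<le> m \<and> m \<le> s \<longrightarrow> S (Suc m) \<subseteq> S m \<union> {a}) \<and> (\<forall>m. s + 1 \<le> m \<longrightarrow> S (Suc m) \<subseteq> S m))"

lemma nearly_decreasing_image_iff:
  assumes f: "inj_on f D" and S: "\<And>m. S m \<subseteq> D"
  shows "nearly_decreasing (\<lambda>m. f ` S m) \<longleftrightarrow> nearly_decreasing S"
proof
  assume "nearly_decreasing (\<lambda>m. f ` S m)"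
  then obtain s b where "s > 0"
    and early: "\<And>m. 1 \<le> m \<and> m \<le> s \<Longrightarrow> f ` S (Suc m) \<subseteq> f ` S m \<union> {b}"
    and late: "\<And>m. s + 1 \<le> m \<Longrightarrow> f ` S (Suc m) \<subseteq> f ` S m"
    unfolding nearly_decreasing_def by blast
  have mem: "x \<in> S m" if "x \<in> S (Suc m)" "f x \<in> f ` S m" for x m
    using that(2) inj_on_image_mem_iff[OF f subsetD[OF S that(1)] S] by simp
  have "S (Suc m) \<subseteq> S m \<union> {inv_into D f b}" if "1 \<le> m \<and> m \<le> s" for m
  proof
    fix x assume x: "x \<in> S (Suc m)"
    then have "f x \<in> f ` S m \<or> f x = b" using early[OF that] by blast
    moreover have "inv_into D f (f x) = x" using inv_into_f_f[OF f subsetD[OF S x]] .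
    ultimately show "x \<in> S m \<union> {inv_into D f b}" using mem[OF x] by auto
  qed
  moreover have "S (Suc m) \<subseteq> S m" if "s + 1 \<le> m" for m
    using late[OF that] mem by blast
  ultimately show "nearly_decreasing S" unfolding nearly_decreasing_def using \<open>s > 0\<close> by blast
next
  assume "nearly_decreasing S"
  then obtain s a where "s > 0"
    and early: "\<And>m. 1 \<le> m \<and> m \<le> s \<Longrightarrow> S (Suc m) \<subseteq> S m \<union> {a}"
    and late: "\<And>m. s + 1 \<le> m \<Longrightarrow> S (Suc m) \<subseteq> S m"
    unfolding nearly_decreasing_def by blast
  have "f ` S (Suc m) \<subseteq> f ` S m \<union> {f a}" if "1 \<le> m \<and> m \<le> s" for m
    using image_mono[OF early[OF that], of f] by simp
  moreover have "f ` S (Suc m) \<subseteq> f ` S m" if "s + 1 \<le> m" for m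
    using image_mono[OF late[OF that]] .
  ultimately show "nearly_decreasing (\<lambda>m. f ` S m)"
    unfolding nearly_decreasing_def using \<open>s > 0\<close> by blast
qed

text \<open>For ideals whose powers have only monomial associated primes, the exceptional prime
  in the definition of nearly copersistence is immaterial: if it is not a monomial prime,
  it is not associated to any power.\<close>

lemma nearly_copersistent_iff_nearly_decreasing:
  fixes J :: "('v::linorder, 'k::field) mpoly set"
  assumes monomial: "\<And>m P. P \<in> Ass W (ideal_pow W J m) \<Longrightarrow> monomial_ideal W P"
  shows "nearly_copersistent W J \<longleftrightarrow> nearly_decreasing (\<lambda>m. Ass W (ideal_pow W J m))"
proof
  assume "nearly_copersistent W J"
  then show "nearly_decreasing (\<lambda>m. Ass W (ideal_pow W J m))"
    unfolding nearly_copersistent_def nearly_decreasing_def by blast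
next
  let ?Ass = "\<lambda>m. Ass W (ideal_pow W J m)"
  assume "nearly_decreasing ?Ass"
  then obtain s a where "s > 0"
    and early: "\<And>m. 1 \<le> m \<and> m \<le> s \<Longrightarrow> ?Ass (Suc m) \<subseteq> ?Ass m \<union> {a}"
    and late: "\<And>m. s + 1 \<le> m \<Longrightarrow> ?Ass (Suc m) \<subseteq> ?Ass m"
    unfolding nearly_decreasing_def by blast
  define p where "p = (if prime_ideal W a \<and> monomial_ideal W a then a else var_prime W {})"
  have p: "prime_ideal W p" "monomial_ideal W p"
    unfolding p_def using var_prime_is_prime var_prime_is_monomial by auto
  have "?Ass (Suc m) \<subseteq> ?Ass m \<union> {p}" if "1 \<le> m \<and> m \<le> s" for m
  proof
    fix P assume P: "P \<in> ?Ass (Suc m)"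
    then have "prime_ideal W P" "monomial_ideal W P" using monomial[OF P] by (simp_all add: Ass_def)
    then show "P \<in> ?Ass m \<union> {p}" using early[OF that] P unfolding p_def by auto
  qed
  then show "nearly_copersistent W J"
    unfolding nearly_copersistent_def using \<open>s > 0\<close> p late by blast
qed

lemma nearly_copersistent_mono_ideal_iff:
  assumes E: "upper_set V E"
  shows "nearly_copersistent V (mono_ideal V E :: ('v::linorder, 'k::field) mpoly set) \<longleftrightarrow>
    nearly_decreasing (\<lambda>m. {A. associated_vars V (exps_pow V E m) A})"
proof -
  have Ass: "Ass V (ideal_pow V (mono_ideal V E :: ('v, 'k) mpoly set) m) =
      var_prime V ` {A. associated_vars V (exps_pow V E m) A}" for m
    unfolding ideal_pow_mono_ideal[OF E] by (rule Ass_mono_ideal[OF upper_set_exps_pow[OF E]])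
  have "nearly_copersistent V (mono_ideal V E :: ('v, 'k) mpoly set) \<longleftrightarrow>
      nearly_decreasing (\<lambda>m. var_prime V ` {A. associated_vars V (exps_pow V E m) A} :: ('v, 'k) mpoly set set)"
    unfolding Ass[symmetric]
    by (rule nearly_copersistent_iff_nearly_decreasing) (auto simp: Ass var_prime_is_monomial)
  also have "\<dots> \<longleftrightarrow> nearly_decreasing (\<lambda>m. {A. associated_vars V (exps_pow V E m) A})"
    by (rule nearly_decreasing_image_iff[OF inj_on_var_prime]) (auto simp: associated_vars_def)
  finally show ?thesis .
qed

lemma nearly_copersistent_weighting_iff:
  assumes I: "monomial_ideal {1..n} (I :: (nat, 'k::field) mpoly set)" and w: "\<forall>j\<in>{1..n}. 0 < w j"
  shows "nearly_copersistent {1..n} (weighting n w I) \<longleftrightarrow> nearly_copersistent {1..n} I"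
proof -
  let ?V = "{1..n}" and ?E = "exps_of {1..n} I"
  interpret exps_coarsening ?V ?V "weight_div w" by (rule exps_coarsening_weight_div[OF w])
  have E: "upper_set ?V ?E"
    by (rule upper_set_exps_of) (use I in \<open>simp add: monomial_ideal_def\<close>)
  have assoc: "associated_vars ?V (exps_vimage ?V (weight_div w) (exps_pow ?V ?E m)) =
      associated_vars ?V (exps_pow ?V ?E m)" for m
    using associated_vars_of_weight_div_vimage[OF w] associated_vars_weight_div_vimage[OF _ w] by blast
  have "nearly_copersistent ?V (weighting n w I) \<longleftrightarrow>
      nearly_copersistent ?V (mono_ideal ?V (exps_vimage ?V (weight_div w) ?E) :: (nat, 'k) mpoly set)"
    by (simp only: weighting_eq_mono_ideal[OF I w])
  also have "\<dots> \<longleftrightarrow> nearly_decreasing (\<lambda>m. {A. associated_vars ?V (exps_pow ?V (exps_vimage ?V (weight_div w) ?E) m) A})"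
    by (rule nearly_copersistent_mono_ideal_iff[OF upper_set_vimage[OF E]])
  also have "\<dots> \<longleftrightarrow> nearly_decreasing (\<lambda>m. {A. associated_vars ?V (exps_pow ?V ?E m) A})"
    by (simp only: vimage_pow[OF E] assoc)
  also have "\<dots> \<longleftrightarrow> nearly_copersistent ?V (mono_ideal ?V ?E :: (nat, 'k) mpoly set)"
    by (rule nearly_copersistent_mono_ideal_iff[OF E, symmetric])
  finally show ?thesis by (simp only: monomial_ideal_eq_mono_ideal[OF I, symmetric])
qed

lemma nearly_copersistent_expansion_iff:
  assumes I: "monomial_ideal {1..n} (I :: (nat, 'k::field) mpoly set)" and i: "\<forall>j\<in>{1..n}. 0 < i j"
  shows "nearly_copersistent (exp_vars n i) (expansion n i I) \<longleftrightarrow> nearly_copersistent {1..n} I"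
proof -
  let ?V = "{1..n}" and ?E = "exps_of {1..n} I" and ?V' = "exp_vars n i"
  interpret exps_coarsening ?V' ?V "collapse n i" by (rule exps_coarsening_collapse)
  have E: "upper_set ?V ?E"
    by (rule upper_set_exps_of) (use I in \<open>simp add: monomial_ideal_def\<close>)
  have assoc: "{B. associated_vars ?V' (exps_vimage ?V' (collapse n i) (exps_pow ?V ?E m)) B} =
      blocks n i ` {A. associated_vars ?V (exps_pow ?V ?E m) A}" for m
    using associated_vars_collapse_vimage[OF i] associated_vars_blocks[OF i] by blast
  have "nearly_copersistent ?V' (expansion n i I :: (nat \<times> nat, 'k) mpoly set) \<longleftrightarrow>
      nearly_copersistent ?V' (mono_ideal ?V' (exps_vimage ?V' (collapse n i) ?E) :: (nat \<times> nat, 'k) mpoly set)"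
    by (simp only: expansion_eq_mono_ideal[OF I])
  also have "\<dots> \<longleftrightarrow> nearly_decreasing (\<lambda>m. {B. associated_vars ?V' (exps_pow ?V' (exps_vimage ?V' (collapse n i) ?E) m) B})"
    by (rule nearly_copersistent_mono_ideal_iff[OF upper_set_vimage[OF E]])
  also have "\<dots> \<longleftrightarrow> nearly_decreasing (\<lambda>m. blocks n i ` {A. associated_vars ?V (exps_pow ?V ?E m) A})"
    by (simp only: vimage_pow[OF E] assoc)
  also have "\<dots> \<longleftrightarrow> nearly_decreasing (\<lambda>m. {A. associated_vars ?V (exps_pow ?V ?E m) A})"
    by (rule nearly_decreasing_image_iff[OF inj_on_blocks[OF i]]) (auto simp: associated_vars_def)
  also have "\<dots> \<longleftrightarrow> nearly_copersistent ?V (mono_ideal ?V ?E :: (nat, 'k) mpoly set)"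
    by (rule nearly_copersistent_mono_ideal_iff[OF E, symmetric])
  finally show ?thesis by (simp only: monomial_ideal_eq_mono_ideal[OF I, symmetric])
qed

theorem lemma4p11:
  fixes I :: "(nat, 'k::field) mpoly set" and n :: nat
  assumes "monomial_ideal {1..n} I"
  shows "(\<forall>i::nat \<Rightarrow> nat. (\<forall>j\<in>{1..n}. 0 < i j) \<longrightarrow>
            (nearly_copersistent {1..n} I \<longleftrightarrow> nearly_copersistent (exp_vars n i) (expansion n i I)))
       \<and> (\<forall>w::nat \<Rightarrow> nat. (\<forall>j\<in>{1..n}. 0 < w j) \<longrightarrow>
            (nearly_copersistent {1..n} I \<longleftrightarrow> nearly_copersistent {1..n} (weighting n w I)))"
  using nearly_copersistent_expansion_iff[OF assms] nearly_copersistent_weighting_iff[OF assms] by simp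

end
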